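(* Let $x\in\mathscr{S}\cdot\mathcal{Y}$ with coefficient matrix $\mathbf{X}$ and let $\varrho=x-\mathcal{P}x$, where $\mathcal{P}$ is one of the two projections $\mathcal{P}_{\hat{\mathcal{Y}}\to\hat{\mathscr{S}}}$, $\mathcal{P}_{\hat{\mathscr{S}}\to\hat{\mathcal{Y}}}$ defined in the context (with reduced dimensions $1\le\hat q\le q$ and $2\le\hat s\le s$). Then $$\|\varrho\|_{\mathcal{S}\cdot\mathcal{Y}}\le\begin{cases}\Sigma_{\hat{\mathcal{Y}}\to\hat{\mathcal{S}}}&\text{if }\mathcal{P}=\mathcal{P}_{\hat{\mathcal{Y}}\to\hat{\mathscr{S}}},\\ \Sigma_{\hat{\mathcal{S}}\to\hat{\mathcal{Y}}}&\text{if }\mathcal{P}=\mathcal{P}_{\hat{\mathscr{S}}\to\hat{\mathcal{Y}}},\end{cases}$$ where $$\Sigma_{\hat{\mathcal{Y}}\to\hat{\mathcal{S}}}=\Big(\sum_{i=\hat q+1}^q\sigma_i^2\Big)^{1/2}+\Big(\sum_{j=\hat s}^s\mathring\sigma_j^2\Big)^{1/2},\qquad \Sigma_{\hat{\mathcal{S}}\to\hat{\mathcal{Y}}}=\Big(\sum_{j=\hat s}^s\underline{\mathring\sigma}_j^2\Big)^{1/2}+\Big(\sum_{i=\hat q+1}^q\underline\sigma_i^2\Big)^{1/2},$$ with $\sigma_i$ the singular values of $\mathbf{L}_{\mathcal{Y}}^T\mathbf{X}\mathbf{L}_{\mathcal{S}}$, $\mathring\sigma_j$ those of $\mathbf{L}_{\mathcal{Y}}^T\mathring{\mathbf{X}}_{\mathscr{S}\cdot\hat{\mathcal{Y}}}\mathbf{L}_{\mathcal{S}}$,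 $\underline{\mathring\sigma}_j$ those of $\mathbf{L}_{\mathcal{Y}}^T\mathring{\mathbf{X}}\mathbf{L}_{\mathcal{S}}$, and $\underline\sigma_i$ those of $\mathbf{L}_{\mathcal{Y}}^T\mathbf{X}_{\hat{\mathscr{S}}\cdot\mathcal{Y}}\mathbf{L}_{\mathcal{S}}$.
   Context: Setting: $T>0$, $\Omega\subset\mathbb{R}^d$ bounded domain, $\mathcal{S}=\mathrm{span}\{\psi_1,\ldots,\psi_s\}\subset L^2(0,T)$ a nodal basis with $\psi_1$ the nodal function at $t=0$ ($\psi_1(0)=1$, $\psi_j(0)=0$ for $j\ge2$), $\mathcal{Y}=\mathrm{span}\{\nu_1,\ldots,\nu_q\}\subset L^2(\Omega)$. $\mathcal{S}\cdot\mathcal{Y}$ is the span of $\psi_j\nu_i$; $x=\sum_{i,j}\mathbf{x}_{i,j}\nu_i\psi_j$ has coefficient matrix $[\mathbf{x}_{i,j}]\in\mathbb{R}^{q\times s}$; all coefficient matrices below are taken with respect to this full basis. Inner product $(x_1,x_2)_{\mathcal{S}\cdot\mathcal{Y}}=\int_0^T\int_\Omega x_1x_2$ and induced norm; for a subspace $\mathcal{Z}\subseteq\mathcal{S}\cdot\mathcal{Y}$, $\Pi_{\mathcal{Z}}$ is the orthogonal projection onto $\mathcal{Z}$ in this inner product. Gramians $\mathbf{M}_{\mathcal{S}}=[(\psi_i,\psi_j)_{L^2(0,T)}]=\mathbf{L}_{\mathcal{S}}\mathbf{L}_{\mathcal{S}}^T$ with $\mathbf{L}_{\mathcal{S}}$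 invertible upper triangular, $\mathbf{M}_{\mathcal{Y}}=[(\nu_i,\nu_j)_{L^2(\Omega)}]=\mathbf{L}_{\mathcal{Y}}\mathbf{L}_{\mathcal{Y}}^T$. $\Pi_{\mathcal{Y}}$ is the $L^2(\Omega)$-projection onto $\mathcal{Y}$, $x_0$ a given initial value, and $\mathscr{S}\cdot\mathcal{Y}=\{x\in\mathcal{S}\cdot\mathcal{Y}:x(0)=\Pi_{\mathcal{Y}}x_0\}$. For a matrix $\mathbf{Z}$, $\mathring{\mathbf{Z}}$ denotes $\mathbf{Z}$ with first column set to zero. Reduced space basis from $\mathbf{Z}\in\mathbb{R}^{q\times s}$: $V_{\hat q}$ = matrix of the $\hat q$ leading left singular vectors of $\mathbf{L}_{\mathcal{Y}}^T\mathbf{Z}\mathbf{L}_{\mathcal{S}}$, $[\hat\nu_1,\ldots,\hat\nu_{\hat q}]^T=V_{\hat q}^T\mathbf{L}_{\mathcal{Y}}^{-1}[\nu_1,\ldots,\nu_q]^T$, $\hat{\mathcal{Y}}=\mathrm{span}\{\hat\nu_i\}$. Reduced time basis (incorporating the initial condition) from $\mathbf{Z}$: $\mathring U_{\hat s-1}$ = the $\hat s-1$ leading right singular vectors of $\mathbf{L}_{\mathcal{Y}}^T\mathring{\mathbf{Z}}\mathbf{L}_{\mathcal{S}}$, $U_{\hat s}=[(\mathbf{L}_{\mathcal{S}}^T)_{:,1}\;\mathring U_{\hat s-1}]$ (first column of $\mathbf{L}_{\mathcal{S}}^T$ prepended), $[\hat\psi_1,\ldots,\hat\psi_{\hat s}]^T=U_{\hat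 s}^T\mathbf{L}_{\mathcal{S}}^{-1}[\psi_1,\ldots,\psi_s]^T$, $\hat{\mathcal{S}}=\mathrm{span}\{\hat\psi_j\}$; the symbol $\hat{\mathscr{S}}$ indicates this construction and that functions satisfy the initial condition $\cdot(0)=\Pi_{\mathcal{Y}}x_0$. Products $\mathcal{S}\cdot\hat{\mathcal{Y}}$, $\hat{\mathcal{S}}\cdot\mathcal{Y}$, $\hat{\mathcal{S}}\cdot\hat{\mathcal{Y}}$ are spans of the corresponding products of basis functions. Projection $\mathcal{P}_{\hat{\mathcal{Y}}\to\hat{\mathscr{S}}}$: build $\hat{\mathcal{Y}}$ from $\mathbf{X}$; let $\mathbf{X}_{\mathscr{S}\cdot\hat{\mathcal{Y}}}$ be the coefficient matrix of $\Pi_{\mathcal{S}\cdot\hat{\mathcal{Y}}}x$; build $\hat{\mathcal{S}}$ from $\mathbf{X}_{\mathscr{S}\cdot\hat{\mathcal{Y}}}$; set $\mathcal{P}_{\hat{\mathcal{Y}}\to\hat{\mathscr{S}}}x=\Pi_{\hat{\mathcal{S}}\cdot\hat{\mathcal{Y}}}\Pi_{\mathcal{S}\cdot\hat{\mathcal{Y}}}x$. Projection $\mathcal{P}_{\hat{\mathscr{S}}\to\hat{\mathcal{Y}}}$: build $\hat{\mathcal{S}}$ from $\mathbf{X}$; let $\mathbf{X}_{\hat{\mathscr{S}}\cdot\mathcal{Y}}$ be the coefficient matrix of $\Pi_{\hat{\mathcal{S}}\cdot\mathcal{Y}}x$; build $\hat{\mathcal{Y}}$ from $\mathbf{X}_{\hat{\mathscr{S}}\cdot\mathcal{Y}}$;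 set $\mathcal{P}_{\hat{\mathscr{S}}\to\hat{\mathcal{Y}}}x=\Pi_{\hat{\mathcal{S}}\cdot\hat{\mathcal{Y}}}\Pi_{\hat{\mathcal{S}}\cdot\mathcal{Y}}x$. Singular values are ordered nonincreasingly and taken to be $0$ for indices exceeding $\min(q,s)$. *)

theory Defs
  imports "HOL-Analysis.Analysis" "Jordan_Normal_Form.Matrix"
begin

text \<open>Conventions: all indices are 0-based. The paper's basis functions
psi_1..psi_s and nu_1..nu_q are psi 0 .. psi (s-1) and nu 0 .. nu (q-1);
matrices are Jordan_Normal_Form matrices (real mat).\<close>

definition ip_T :: "real \<Rightarrow> (real \<Rightarrow> real) \<Rightarrow> (real \<Rightarrow> real) \<Rightarrow> real" where
  "ip_T T f g = (LINT t:{0..T}|lborel. f t * g t)"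

definition ip_Om :: "'d::euclidean_space set \<Rightarrow> ('d \<Rightarrow> real) \<Rightarrow> ('d \<Rightarrow> real) \<Rightarrow> real" where
  "ip_Om \<Omega> f g = (LINT \<xi>:\<Omega>|lborel. f \<xi> * g \<xi>)"

definition ip_SY :: "real \<Rightarrow> 'd::euclidean_space set \<Rightarrow> (real \<Rightarrow> 'd \<Rightarrow> real) \<Rightarrow> (real \<Rightarrow> 'd \<Rightarrow> real) \<Rightarrow> real" where
  "ip_SY T \<Omega> x1 x2 = (LINT t:{0..T}|lborel. (LINT \<xi>:\<Omega>|lborel. x1 t \<xi> * x2 t \<xi>))"

definition norm_SY :: "real \<Rightarrow> 'd::euclidean_space set \<Rightarrow> (real \<Rightarrow> 'd \<Rightarrow> real) \<Rightarrow> real" where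
  "norm_SY T \<Omega> x = sqrt (ip_SY T \<Omega> x x)"

definition orth_proj :: "('a::minus \<Rightarrow> 'a \<Rightarrow> real) \<Rightarrow> 'a set \<Rightarrow> 'a \<Rightarrow> 'a" where
  "orth_proj ip Z x = (THE p. p \<in> Z \<and> (\<forall>z\<in>Z. ip (x - p) z = 0))"

definition gram_T :: "real \<Rightarrow> nat \<Rightarrow> (nat \<Rightarrow> real \<Rightarrow> real) \<Rightarrow> real mat" where
  "gram_T T s \<psi> = mat s s (\<lambda>(i,j). ip_T T (\<psi> i) (\<psi> j))"

definition gram_Om :: "'d::euclidean_space set \<Rightarrow> nat \<Rightarrow> (nat \<Rightarrow> 'd \<Rightarrow> real) \<Rightarrow> real mat" where
  "gram_Om \<Omega> q \<nu> = mat q q (\<lambda>(i,j). ip_Om \<Omega> (\<nu> i) (\<nu> j))"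

definition fspan :: "nat \<Rightarrow> (nat \<Rightarrow> 'd \<Rightarrow> real) \<Rightarrow> ('d \<Rightarrow> real) set" where
  "fspan q \<nu> = {(\<lambda>\<xi>. \<Sum>i<q. c i * \<nu> i \<xi>) | c. True}"

definition prod_span :: "nat \<Rightarrow> (nat \<Rightarrow> 'd \<Rightarrow> real) \<Rightarrow> nat \<Rightarrow> (nat \<Rightarrow> real \<Rightarrow> real)
    \<Rightarrow> (real \<Rightarrow> 'd \<Rightarrow> real) set" where
  "prod_span q \<nu> s \<psi> = {(\<lambda>t \<xi>. \<Sum>i<q. \<Sum>j<s. C i j * \<nu> i \<xi> * \<psi> j t) | C. True}"

definition mat_to_fun :: "(nat \<Rightarrow> 'd \<Rightarrow> real) \<Rightarrow> (nat \<Rightarrow> real \<Rightarrow> real) \<Rightarrow> real mat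
    \<Rightarrow> (real \<Rightarrow> 'd \<Rightarrow> real)" where
  "mat_to_fun \<nu> \<psi> X = (\<lambda>t \<xi>. \<Sum>i<dim_row X. \<Sum>j<dim_col X. X $$ (i,j) * \<nu> i \<xi> * \<psi> j t)"

definition coeff_mat :: "nat \<Rightarrow> nat \<Rightarrow> (nat \<Rightarrow> 'd \<Rightarrow> real) \<Rightarrow> (nat \<Rightarrow> real \<Rightarrow> real)
    \<Rightarrow> (real \<Rightarrow> 'd \<Rightarrow> real) \<Rightarrow> real mat" where
  "coeff_mat q s \<nu> \<psi> x = (THE X. X \<in> carrier_mat q s \<and> x = mat_to_fun \<nu> \<psi> X)"

definition minv :: "real mat \<Rightarrow> real mat" where
  "minv L = (SOME M. M \<in> carrier_mat (dim_row L) (dim_row L) \<and>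
      L * M = 1\<^sub>m (dim_row L) \<and> M * L = 1\<^sub>m (dim_row L))"

definition zero_first_col :: "real mat \<Rightarrow> real mat" where
  "zero_first_col Z = mat (dim_row Z) (dim_col Z) (\<lambda>(i,j). if j = 0 then 0 else Z $$ (i,j))"

definition is_svd :: "real mat \<Rightarrow> real mat \<Rightarrow> real mat \<Rightarrow> real mat \<Rightarrow> bool" where
  "is_svd A U D V \<longleftrightarrow>
     U \<in> carrier_mat (dim_row A) (dim_row A) \<and> V \<in> carrier_mat (dim_col A) (dim_col A) \<and>
     D \<in> carrier_mat (dim_row A) (dim_col A) \<and>
     transpose_mat U * U = 1\<^sub>m (dim_row A) \<and> transpose_mat V * V = 1\<^sub>m (dim_col A) \<and>
     (\<forall>i<dim_row A. \<forall>j<dim_col A. i \<noteq> j \<longrightarrow> D $$ (i,j) = 0) \<and>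
     (\<forall>i<min (dim_row A) (dim_col A). 0 \<le> D $$ (i,i)) \<and>
     (\<forall>i j. i \<le> j \<longrightarrow> j < min (dim_row A) (dim_col A) \<longrightarrow> D $$ (j,j) \<le> D $$ (i,i)) \<and>
     A = U * D * transpose_mat V"

definition sing_val :: "real mat \<Rightarrow> nat \<Rightarrow> real" where
  "sing_val D i = (if i < min (dim_row D) (dim_col D) then D $$ (i,i) else 0)"

text \<open>Reduced space basis: U = left singular vectors (of L_Y^T Z L_S);
V_qh = first qh columns of U; nuhat = V_qh^T L_Y^-1 nu.\<close>
definition red_space_basis :: "real mat \<Rightarrow> nat \<Rightarrow> (nat \<Rightarrow> 'd \<Rightarrow> real) \<Rightarrow> nat \<Rightarrow> real mat
    \<Rightarrow> nat \<Rightarrow> 'd \<Rightarrow> real" where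
  "red_space_basis LY q \<nu> qh U =
     (let Vq = mat q qh (\<lambda>(i,k). U $$ (i,k));
          W = transpose_mat Vq * minv LY
      in (\<lambda>k \<xi>. \<Sum>i<q. W $$ (k,i) * \<nu> i \<xi>))"

text \<open>Reduced time basis: V = right singular vectors (of L_Y^T Zring L_S);
U_sh = [first column of L_S^T, first sh-1 columns of V]; psihat = U_sh^T L_S^-1 psi.\<close>
definition red_time_basis :: "real mat \<Rightarrow> nat \<Rightarrow> (nat \<Rightarrow> real \<Rightarrow> real) \<Rightarrow> nat \<Rightarrow> real mat
    \<Rightarrow> nat \<Rightarrow> real \<Rightarrow> real" where
  "red_time_basis LS s \<psi> sh V =
     (let Ush = mat s sh (\<lambda>(j,k). if k = 0 then transpose_mat LS $$ (j,0) else V $$ (j,k-1));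
          W = transpose_mat Ush * minv LS
      in (\<lambda>k t. \<Sum>j<s. W $$ (k,j) * \<psi> j t))"

end

(* With X the coefficient matrix of x, the matrix L_Y^T X L_S holds the coefficients of x with
   respect to the L2-orthonormal bases obtained from the Cholesky-type factors of the Gramians,
   so the space-time norm becomes the Frobenius norm and every orthogonal projection onto a
   product span of reduced bases becomes a least-squares problem min_C |A - P C Q|.
   For the spatial reduction the choice C = V^T A, with V the leading left singular vectors of A,
   leaves exactly the trailing singular values.  For the temporal reduction the first reduced
   time function is built from the first column of L_S^T, which reproduces the initial-value
   column of A exactly; only the matrix with that column removed has to be approximated by its
   leading right singular vectors, again leaving the trailing singular values.  The two
   projections are applied one after the other, so the triangle inequality adds the errors. *)
theory Submission
  imports Defs "Jordan_Normal_Form.Determinant"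
begin

(* Products are reassociated explicitly: as a simp rule, assoc_mult_mat needs carrier facts
   for intermediate dimensions that the simplifier cannot guess. *)
declare assoc_mult_mat [simp del]

section \<open>Matrix arithmetic and the Frobenius inner product\<close>

definition frob_inner :: "real mat \<Rightarrow> real mat \<Rightarrow> real" where
  "frob_inner A B = (\<Sum>i<dim_row A. \<Sum>j<dim_col A. A $$ (i,j) * B $$ (i,j))"

definition frob_norm :: "real mat \<Rightarrow> real" where
  "frob_norm A = sqrt (frob_inner A A)"

lemma index_mult_mat_sum:
  "A \<in> carrier_mat r n \<Longrightarrow> B \<in> carrier_mat n c \<Longrightarrow> i < r \<Longrightarrow> j < c \<Longrightarrow>
   (A * B) $$ (i,j) = (\<Sum>k<n. A $$ (i,k) * B $$ (k,j))"
  by (auto simp: scalar_prod_def lessThan_atLeast0 intro!: sum.cong)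

lemma index_mult3_mat_sum:
  assumes "A \<in> carrier_mat r n" "C \<in> carrier_mat n m" "B \<in> carrier_mat m c" "i < r" "j < c"
  shows "(A * C * B) $$ (i,j) = (\<Sum>k<n. \<Sum>l<m. A $$ (i,k) * C $$ (k,l) * B $$ (l,j))"
proof -
  have "(A * C * B) $$ (i,j) = (\<Sum>l<m. (A * C) $$ (i,l) * B $$ (l,j))"
    using assms by (intro index_mult_mat_sum) auto
  also have "\<dots> = (\<Sum>l<m. (\<Sum>k<n. A $$ (i,k) * C $$ (k,l)) * B $$ (l,j))"
    using assms by (intro sum.cong refl) (subst index_mult_mat_sum[of A r n C m], auto)
  finally show ?thesis by (simp add: sum_distrib_right sum.swap[of _ "{..<m}"])
qed

lemma assoc_mult_mat4:
  assumes "A \<in> carrier_mat n1 n2" "B \<in> carrier_mat n2 n3" "C \<in> carrier_mat n3 n4"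
    "D \<in> carrier_mat n4 n5"
  shows "A * (B * C) * D = A * B * (C * D)"
  using assms by (simp add: assoc_mult_mat[of A n1 n2 B n3 C n4, symmetric]
      assoc_mult_mat[of "A * B" n1 n3 C n4 D n5])

lemma assoc_mult_mat5:
  assumes "A \<in> carrier_mat n1 n2" "B \<in> carrier_mat n2 n3" "C \<in> carrier_mat n3 n4"
    "D \<in> carrier_mat n4 n5" "E \<in> carrier_mat n5 n6"
  shows "A * (B * C * D) * E = A * B * C * (D * E)"
proof -
  have "A * (B * C * D) = A * (B * C) * D"
    using assms by (intro assoc_mult_mat[symmetric, of _ n1 n2 _ n4 _ n5]) auto
  also have "A * (B * C) = A * B * C"
    using assms by (intro assoc_mult_mat[symmetric]) auto
  moreover have "A * B * C \<in> carrier_mat n1 n4"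
    using assms by (blast intro: mult_carrier_mat)
  ultimately show ?thesis
    using assms by (simp add: assoc_mult_mat[of "A * B * C" n1 n4 D n5 E n6])
qed

lemma minus_mat_eq_0_imp_eq:
  fixes A B :: "real mat"
  assumes "A \<in> carrier_mat n m" "B \<in> carrier_mat n m" "A - B = 0\<^sub>m n m"
  shows "A = B"
proof (rule eq_matI)
  fix i j assume "i < dim_row B" "j < dim_col B"
  then show "A $$ (i,j) = B $$ (i,j)"
    using arg_cong[OF assms(3), of "\<lambda>M. M $$ (i,j)"] assms(1,2) by simp
qed (use assms in auto)

lemma minv_mat:
  fixes L :: "real mat"
  assumes inv: "invertible_mat L" and L: "L \<in> carrier_mat n n"
  shows "minv L \<in> carrier_mat n n" "L * minv L = 1\<^sub>m n" "minv L * L = 1\<^sub>m n"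
proof -
  obtain B where B: "L * B = 1\<^sub>m (dim_row L)" "B * L = 1\<^sub>m (dim_row B)"
    using inv unfolding invertible_mat_def inverts_mat_def by blast
  then have "B \<in> carrier_mat n n"
    using L by (metis carrier_matD carrier_matI index_mult_mat(2,3) index_one_mat(2,3))
  then have "\<exists>M. M \<in> carrier_mat (dim_row L) (dim_row L) \<and> L * M = 1\<^sub>m (dim_row L) \<and> M * L = 1\<^sub>m (dim_row L)"
    using B L by auto
  from someI_ex[OF this] show "minv L \<in> carrier_mat n n" "L * minv L = 1\<^sub>m n" "minv L * L = 1\<^sub>m n"
    using L unfolding minv_def by auto
qed

lemma sum_swap_pairs:
  "(\<Sum>a\<in>A. \<Sum>b\<in>B. \<Sum>i\<in>I. \<Sum>j\<in>J. f a b i j) = (\<Sum>i\<in>I. \<Sum>j\<in>J. \<Sum>a\<in>A. \<Sum>b\<in>B. f a b i j)"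
proof -
  have "(\<Sum>a\<in>A. \<Sum>b\<in>B. \<Sum>i\<in>I. \<Sum>j\<in>J. f a b i j) = (\<Sum>a\<in>A. \<Sum>i\<in>I. \<Sum>b\<in>B. \<Sum>j\<in>J. f a b i j)"
    by (rule sum.cong[OF refl], rule sum.swap)
  also have "\<dots> = (\<Sum>i\<in>I. \<Sum>a\<in>A. \<Sum>j\<in>J. \<Sum>b\<in>B. f a b i j)"
    by (subst sum.swap) (simp add: sum.swap[of _ B])
  also have "\<dots> = (\<Sum>i\<in>I. \<Sum>j\<in>J. \<Sum>a\<in>A. \<Sum>b\<in>B. f a b i j)"
    by (rule sum.cong[OF refl], rule sum.swap)
  finally show ?thesis .
qed

lemma frob_inner_commute:
  "A \<in> carrier_mat n m \<Longrightarrow> B \<in> carrier_mat n m \<Longrightarrow> frob_inner A B = frob_inner B A"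
  unfolding frob_inner_def by (simp add: mult.commute)

lemma frob_inner_add_left:
  "A \<in> carrier_mat n m \<Longrightarrow> B \<in> carrier_mat n m \<Longrightarrow> C \<in> carrier_mat n m \<Longrightarrow>
   frob_inner (A + B) C = frob_inner A C + frob_inner B C"
  unfolding frob_inner_def by (simp add: distrib_right sum.distrib)

lemma frob_inner_add_right:
  "A \<in> carrier_mat n m \<Longrightarrow> B \<in> carrier_mat n m \<Longrightarrow> C \<in> carrier_mat n m \<Longrightarrow>
   frob_inner C (A + B) = frob_inner C A + frob_inner C B"
  unfolding frob_inner_def by (simp add: distrib_left sum.distrib)

lemma frob_inner_minus_left:
  "A \<in> carrier_mat n m \<Longrightarrow> B \<in> carrier_mat n m \<Longrightarrow> C \<in> carrier_mat n m \<Longrightarrow>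
   frob_inner (A - B) C = frob_inner A C - frob_inner B C"
  unfolding frob_inner_def by (simp add: left_diff_distrib sum_subtractf)

lemma frob_inner_self_nonneg: "0 \<le> frob_inner A A"
  unfolding frob_inner_def by (intro sum_nonneg) auto

lemma frob_inner_self_eq_0:
  assumes A: "A \<in> carrier_mat n m" and A0: "frob_inner A A = 0"
  shows "A = 0\<^sub>m n m"
proof (rule eq_matI)
  fix i j assume "i < dim_row (0\<^sub>m n m)" "j < dim_col (0\<^sub>m n m)"
  then have ij: "i \<in> {..<n}" "j \<in> {..<m}" by auto
  have "(\<Sum>j<m. A $$ (i,j) * A $$ (i,j)) = 0"
    using A A0 ij unfolding frob_inner_def by (subst (asm) sum_nonneg_eq_0_iff) (auto intro: sum_nonneg)
  then show "A $$ (i,j) = 0\<^sub>m n m $$ (i,j)"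
    using ij by (subst (asm) sum_nonneg_eq_0_iff) auto
qed (use A in auto)

lemma frob_inner_mult:
  assumes P: "P \<in> carrier_mat n' n" and C: "C \<in> carrier_mat n m" and Q: "Q \<in> carrier_mat m m'"
    and N: "N \<in> carrier_mat n' m'"
  shows "frob_inner (P * C * Q) N = frob_inner C (transpose_mat P * N * transpose_mat Q)"
proof -
  have "dim_row (P * C * Q) = n'" "dim_col (P * C * Q) = m'" using P Q by auto
  then have "frob_inner (P * C * Q) N
      = (\<Sum>a<n'. \<Sum>b<m'. \<Sum>i<n. \<Sum>j<m. C $$ (i,j) * (P $$ (a,i) * N $$ (a,b) * Q $$ (j,b)))"
    unfolding frob_inner_def using P C Q
    by (intro sum.cong refl) (auto simp: index_mult3_mat_sum[OF P C Q] sum_distrib_left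
        sum_distrib_right mult_ac simp del: index_mult_mat(1))
  also have "\<dots> = (\<Sum>i<n. \<Sum>j<m. \<Sum>a<n'. \<Sum>b<m'. C $$ (i,j) * (P $$ (a,i) * N $$ (a,b) * Q $$ (j,b)))"
    by (rule sum_swap_pairs)
  also have "\<dots> = frob_inner C (transpose_mat P * N * transpose_mat Q)"
    unfolding frob_inner_def using P C Q N
    by (intro sum.cong refl) (auto simp: index_mult3_mat_sum[of _ n n' _ m' _ m] sum_distrib_left
        mult_ac simp del: index_mult_mat(1))
  finally show ?thesis .
qed

lemma frob_norm_orthogonal_mult:
  assumes U: "U \<in> carrier_mat n n" "transpose_mat U * U = 1\<^sub>m n"
    and V: "V \<in> carrier_mat m m" "transpose_mat V * V = 1\<^sub>m m" and M: "M \<in> carrier_mat n m"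
  shows "frob_norm (U * M * transpose_mat V) = frob_norm M"
proof -
  have "transpose_mat U * (U * M * transpose_mat V) = transpose_mat U * U * M * transpose_mat V"
    using U(1) V(1) M by (simp add: assoc_mult_mat[of _ n n _ n _ m] assoc_mult_mat[of _ n n _ m _ m])
  also have "\<dots> = M * transpose_mat V" using U M by simp
  finally have "transpose_mat U * (U * M * transpose_mat V) * V = M * (transpose_mat V * V)"
    using V(1) M by (simp add: assoc_mult_mat[of _ n m _ m _ m])
  also have "\<dots> = M" using V M by simp
  finally show ?thesis
    unfolding frob_norm_def using U V M by (subst frob_inner_mult[of _ n n _ m _ m]) auto
qed

lemma frob_inner_zero_right: "A \<in> carrier_mat n m \<Longrightarrow> frob_inner A (0\<^sub>m n m) = 0"
  unfolding frob_inner_def by (intro sum.neutral ballI) auto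

lemma frob_norm_L2_set: "frob_norm A = L2_set (($$) A) ({..<dim_row A} \<times> {..<dim_col A})"
  unfolding frob_norm_def frob_inner_def L2_set_def
  by (simp add: sum.cartesian_product power2_eq_square case_prod_beta)

lemma frob_norm_triangle:
  assumes "A \<in> carrier_mat n m" "B \<in> carrier_mat n m" "C \<in> carrier_mat n m"
  shows "frob_norm (A - C) \<le> frob_norm (A - B) + frob_norm (B - C)"
proof -
  have "L2_set (($$) (A - C)) ({..<n} \<times> {..<m})
      = L2_set (\<lambda>ij. (A - B) $$ ij + (B - C) $$ ij) ({..<n} \<times> {..<m})"
    using assms by (intro L2_set_cong) auto
  also have "\<dots> \<le> L2_set (($$) (A - B)) ({..<n} \<times> {..<m}) + L2_set (($$) (B - C)) ({..<n} \<times> {..<m})"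
    by (rule L2_set_triangle_ineq)
  finally show ?thesis using assms by (simp add: frob_norm_L2_set)
qed

lemma frob_norm_transpose: "frob_norm (transpose_mat A) = frob_norm A"
  unfolding frob_norm_def frob_inner_def by (simp add: sum.swap[of _ "{..<dim_row A}"])

lemma frob_norm_le_add_orthogonal:
  assumes "R \<in> carrier_mat n m" "E \<in> carrier_mat n m" "frob_inner R E = 0"
  shows "frob_norm R \<le> frob_norm (R + E)"
proof -
  have "frob_inner (R + E) (R + E) = frob_inner R R + frob_inner E E"
    using assms by (simp add: frob_inner_add_left frob_inner_add_right frob_inner_commute[of E n m R])
  then show ?thesis unfolding frob_norm_def using frob_inner_self_nonneg[of E] by simp
qed

section \<open>Least squares\<close>

lemma orthogonal_residual_exists:
  fixes b :: "'i \<Rightarrow> real" and h :: "'e \<Rightarrow> 'i \<Rightarrow> real"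
  assumes I: "finite I" and F: "finite F"
  shows "\<exists>c. \<forall>e\<in>F. (\<Sum>i\<in>I. (b i - (\<Sum>e'\<in>F. c e' * h e' i)) * h e i) = 0"
  using F
proof (induction F arbitrary: b rule: finite_induct)
  case empty
  show ?case by simp
next
  case (insert e F)
  \<comment> \<open>A Gram-Schmidt step: split h e into its part in the span of F and a residual r,
    then correct the coefficients of b along r.\<close>
  define ip where "ip f g = (\<Sum>i\<in>I. f i * g i)" for f g :: "'i \<Rightarrow> real"
  define res where "res g c i = g i - (\<Sum>e'\<in>F. c e' * h e' i)" for g :: "'i \<Rightarrow> real" and c i
  have ip_comb: "ip f (\<lambda>i. \<Sum>e'\<in>F. d e' * h e' i) = (\<Sum>e'\<in>F. d e' * ip f (h e'))" for f d
    unfolding ip_def sum_distrib_left by (subst sum.swap) (simp add: mult_ac)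
  obtain cb where cb: "\<forall>e'\<in>F. ip (res b cb) (h e') = 0"
    using insert.IH[of b] unfolding ip_def res_def by blast
  obtain ch where ch: "\<forall>e'\<in>F. ip (res (h e) ch) (h e') = 0"
    using insert.IH[of "h e"] unfolding ip_def res_def by blast
  define r where "r = res (h e) ch"
  define \<gamma> where "\<gamma> = ip (res b cb) r / ip r r"
  define c where "c = (\<lambda>e'. cb e' - \<gamma> * ch e')(e := \<gamma>)"
  define R where "R i = res b cb i - \<gamma> * r i" for i
  have R_eq: "b i - (\<Sum>e'\<in>insert e F. c e' * h e' i) = R i" for i
  proof -
    have "(\<Sum>e'\<in>F. c e' * h e' i) = (\<Sum>e'\<in>F. (cb e' - \<gamma> * ch e') * h e' i)"
      using insert.hyps(2) unfolding c_def by (intro sum.cong) auto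
    then show ?thesis
      using insert.hyps unfolding R_def res_def r_def c_def
      by (simp add: algebra_simps sum_subtractf sum_distrib_left)
  qed
  have R_orth_F: "ip R (h e') = 0" if "e' \<in> F" for e'
    using cb ch that unfolding ip_def R_def r_def
    by (simp add: left_diff_distrib sum_subtractf mult.assoc sum_distrib_left[symmetric])
  have ip_R_r: "ip R r = ip (res b cb) r - \<gamma> * ip r r"
    unfolding ip_def R_def by (simp add: left_diff_distrib sum_subtractf mult.assoc sum_distrib_left)
  have "ip R r = 0"
  proof (cases "ip r r = 0")
    case True
    then have "\<forall>i\<in>I. r i * r i = 0"
      using I unfolding ip_def by (subst (asm) sum_nonneg_eq_0_iff) auto
    then show ?thesis using ip_R_r unfolding ip_def by simp
  next
    case False
    then show ?thesis using ip_R_r unfolding \<gamma>_def by simp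
  qed
  moreover have "h e = (\<lambda>i. (\<Sum>e'\<in>F. ch e' * h e' i) + r i)"
    unfolding r_def res_def by simp
  ultimately have "ip R (h e) = 0"
    using R_orth_F ip_comb[of R ch] unfolding ip_def by (simp add: distrib_left sum.distrib)
  with R_orth_F show ?case
    unfolding R_eq[symmetric] ip_def by (intro exI[of _ c]) auto
qed

lemma normal_equations_solvable:
  fixes P1 P2 B :: "real mat"
  assumes P1: "P1 \<in> carrier_mat q n" and P2: "P2 \<in> carrier_mat m s" and B: "B \<in> carrier_mat q s"
  obtains C0 where "C0 \<in> carrier_mat n m"
    "transpose_mat P1 * (B - P1 * C0 * P2) * transpose_mat P2 = 0\<^sub>m n m"
proof -
  define h where "h = (\<lambda>(k,l) (a,b). P1 $$ (a,k) * P2 $$ (l,b))"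
  define I where "I = {..<q} \<times> {..<s}"
  define F where "F = {..<n} \<times> {..<m}"
  obtain c where c: "\<forall>e\<in>F. (\<Sum>i\<in>I. (B $$ i - (\<Sum>e'\<in>F. c e' * h e' i)) * h e i) = 0"
    using orthogonal_residual_exists[where I=I and F=F and b="($$) B" and h=h]
    unfolding I_def F_def by auto
  define C0 where "C0 = mat n m c"
  have C0: "C0 \<in> carrier_mat n m" unfolding C0_def by simp
  have proj: "(P1 * C0 * P2) $$ i = (\<Sum>e\<in>F. c e * h e i)" if "i \<in> I" for i
    using that P1 P2 C0 unfolding I_def F_def h_def C0_def
    by (auto simp: index_mult3_mat_sum[OF P1 _ P2] sum.cartesian_product mult_ac
        simp del: index_mult_mat(1) intro!: sum.cong)
  have entry: "(transpose_mat P1 * R * transpose_mat P2) $$ e = (\<Sum>i\<in>I. R $$ i * h e i)"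
    if "R \<in> carrier_mat q s" "e \<in> F" for R e
    using that P1 P2 unfolding I_def F_def h_def
    by (auto simp: index_mult3_mat_sum[of _ n q _ s _ m] sum.cartesian_product mult_ac
        simp del: index_mult_mat(1) intro!: sum.cong)
  have "(transpose_mat P1 * (B - P1 * C0 * P2) * transpose_mat P2) $$ e = 0" if e: "e \<in> F" for e
  proof -
    have "(transpose_mat P1 * (B - P1 * C0 * P2) * transpose_mat P2) $$ e
        = (\<Sum>i\<in>I. (B - P1 * C0 * P2) $$ i * h e i)"
      using B P1 P2 C0 e by (intro entry) auto
    also have "\<dots> = (\<Sum>i\<in>I. (B $$ i - (\<Sum>e'\<in>F. c e' * h e' i)) * h e i)"
      using B P1 P2 C0 proj mult_carrier_mat[OF mult_carrier_mat[OF P1 C0] P2]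
      by (intro sum.cong refl) (auto simp: I_def simp del: index_mult_mat(1))
    finally show ?thesis using c e by simp
  qed
  then have "transpose_mat P1 * (B - P1 * C0 * P2) * transpose_mat P2 = 0\<^sub>m n m"
    using P1 P2 B unfolding F_def by (intro eq_matI) auto
  with C0 show ?thesis by (rule that)
qed

lemma frob_inner_normal_residual:
  fixes P1 P2 B C0 C :: "real mat"
  assumes P1: "P1 \<in> carrier_mat q n" and P2: "P2 \<in> carrier_mat m s" and B: "B \<in> carrier_mat q s"
    and C0: "C0 \<in> carrier_mat n m" and C: "C \<in> carrier_mat n m"
    and normal: "transpose_mat P1 * (B - P1 * C0 * P2) * transpose_mat P2 = 0\<^sub>m n m"
  shows "frob_inner (B - P1 * C0 * P2) (P1 * C * P2) = 0"
proof -
  have PCP: "P1 * C * P2 \<in> carrier_mat q s" and PCP0: "P1 * C0 * P2 \<in> carrier_mat q s"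
    using P1 P2 C C0 by (meson mult_carrier_mat)+
  have "frob_inner (B - P1 * C0 * P2) (P1 * C * P2) = frob_inner (P1 * C * P2) (B - P1 * C0 * P2)"
    using frob_inner_commute[OF minus_carrier_mat[OF PCP0] PCP] .
  also have "\<dots> = frob_inner C (transpose_mat P1 * (B - P1 * C0 * P2) * transpose_mat P2)"
    using frob_inner_mult[OF P1 C P2 minus_carrier_mat[OF PCP0]] .
  finally show ?thesis unfolding normal using frob_inner_zero_right[OF C] by simp
qed

lemma mult3_minus_distrib_mat:
  fixes W W' C C' :: "real mat"
  assumes W: "W \<in> carrier_mat q n" and W': "W' \<in> carrier_mat m s"
    and C: "C \<in> carrier_mat n m" and C': "C' \<in> carrier_mat n m"
  shows "W * C * W' - W * C' * W' = W * (C - C') * W'"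
  using mult_minus_distrib_mat[OF W C C'] minus_mult_distrib_mat[OF _ _ W'] W C C'
  by (metis mult_carrier_mat)

lemma mult3_set_minus_closed:
  fixes W W' :: "real mat"
  assumes W: "W \<in> carrier_mat n q" and W': "W' \<in> carrier_mat m s"
    and A: "A \<in> {transpose_mat W * C * W' | C. C \<in> carrier_mat n m}"
    and A': "A' \<in> {transpose_mat W * C * W' | C. C \<in> carrier_mat n m}"
  shows "A - A' \<in> {transpose_mat W * C * W' | C. C \<in> carrier_mat n m}"
proof -
  obtain C C' where C: "C \<in> carrier_mat n m" "A = transpose_mat W * C * W'"
    and C': "C' \<in> carrier_mat n m" "A' = transpose_mat W * C' * W'"
    using A A' by blast
  then have "A - A' = transpose_mat W * (C - C') * W'"
    using mult3_minus_distrib_mat[OF transpose_carrier_mat[THEN iffD2, OF W] W'] by simp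
  then show ?thesis using minus_carrier_mat[OF C'(1), of C] by blast
qed

section \<open>Truncated singular value decompositions\<close>

definition lead_cols :: "'a mat \<Rightarrow> nat \<Rightarrow> 'a mat" where
  "lead_cols U k = mat (dim_row U) k (\<lambda>(i,j). U $$ (i,j))"

lemma lead_cols_carrier [simp]: "U \<in> carrier_mat n n' \<Longrightarrow> lead_cols U k \<in> carrier_mat n k"
  unfolding lead_cols_def by simp

lemma is_svdD:
  assumes "is_svd A U D V" and "A \<in> carrier_mat q s"
  shows "U \<in> carrier_mat q q" "transpose_mat U * U = 1\<^sub>m q"
    and "V \<in> carrier_mat s s" "transpose_mat V * V = 1\<^sub>m s"
    and "D \<in> carrier_mat q s" "\<And>i j. i < q \<Longrightarrow> j < s \<Longrightarrow> i \<noteq> j \<Longrightarrow> D $$ (i,j) = 0"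
    and "A = U * D * transpose_mat V"
proof -
  have "dim_row A = q" "dim_col A = s" using assms(2) by auto
  with assms(1) show "U \<in> carrier_mat q q" "transpose_mat U * U = 1\<^sub>m q"
    "V \<in> carrier_mat s s" "transpose_mat V * V = 1\<^sub>m s" "D \<in> carrier_mat q s"
    "A = U * D * transpose_mat V"
    unfolding is_svd_def by blast+
  with assms(1) \<open>dim_row A = q\<close> \<open>dim_col A = s\<close>
  show "\<And>i j. i < q \<Longrightarrow> j < s \<Longrightarrow> i \<noteq> j \<Longrightarrow> D $$ (i,j) = 0"
    unfolding is_svd_def by blast
qed

lemma is_svd_transpose:
  assumes "is_svd A U D V"
  shows "is_svd (transpose_mat A) V (transpose_mat D) U"
proof -
  define q s where "q = dim_row A" and "s = dim_col A"
  have U: "U \<in> carrier_mat q q" "transpose_mat U * U = 1\<^sub>m q"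
    and V: "V \<in> carrier_mat s s" "transpose_mat V * V = 1\<^sub>m s"
    and D: "D \<in> carrier_mat q s" "\<forall>i<q. \<forall>j<s. i \<noteq> j \<longrightarrow> D $$ (i,j) = 0"
      "\<forall>i<min q s. 0 \<le> D $$ (i,i)"
      "\<forall>i j. i \<le> j \<longrightarrow> j < min q s \<longrightarrow> D $$ (j,j) \<le> D $$ (i,i)"
    and A: "A = U * D * transpose_mat V"
    using assms unfolding is_svd_def q_def s_def by blast+
  have "transpose_mat (U * D * transpose_mat V) = V * (transpose_mat D * transpose_mat U)"
    using U V D by (simp add: transpose_mult[of "U * D" q s _ s] transpose_mult[of U q q D s])
  also have "\<dots> = V * transpose_mat D * transpose_mat U"
    using U V D by (simp add: assoc_mult_mat[of V s s _ q _ q])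
  finally have "transpose_mat A = V * transpose_mat D * transpose_mat U" unfolding A .
  moreover have "dim_row (transpose_mat A) = s" "dim_col (transpose_mat A) = q"
    unfolding q_def s_def by simp_all
  moreover have "min s q = min q s" by (rule min.commute)
  ultimately show ?thesis
    unfolding is_svd_def using U V D by simp
qed

lemma sing_val_transpose: "sing_val (transpose_mat D) = sing_val D"
  unfolding sing_val_def by (rule ext) (simp add: min.commute)

lemma sum_if_le_eq_atLeastLessThan:
  "(\<Sum>i<(q::nat). if k \<le> i then f i else 0) = (\<Sum>i\<in>{k..<q}. f i)"
proof -
  have "{i\<in>{..<q}. k \<le> i} = {k..<q}" by auto
  then show ?thesis using sum.inter_filter[of "{..<q}" f "\<lambda>i. k \<le> i"] by simp
qed

definition tail_proj :: "nat \<Rightarrow> nat \<Rightarrow> real mat" where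
  "tail_proj n k = mat n n (\<lambda>(i,j). if i = j \<and> k \<le> i then 1 else 0)"

lemma tail_proj_carrier [simp]: "tail_proj n k \<in> carrier_mat n n"
  unfolding tail_proj_def by simp

lemma dim_tail_proj [simp]: "dim_row (tail_proj n k) = n" "dim_col (tail_proj n k) = n"
  unfolding tail_proj_def by simp_all

lemma index_tail_proj_mult:
  assumes "N \<in> carrier_mat n m" "i < n" "j < m"
  shows "(tail_proj n k * N) $$ (i,j) = (if k \<le> i then N $$ (i,j) else 0)"
  using assms unfolding tail_proj_def
  by (simp add: index_mult_mat_sum[of _ n n _ m] if_distrib[of "\<lambda>x. x * _"] sum.delta
      del: index_mult_mat(1) cong: if_cong)

lemma lead_cols_proj_residual:
  assumes U: "U \<in> carrier_mat q q" "transpose_mat U * U = 1\<^sub>m q" and A: "A \<in> carrier_mat q s"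
    and k: "k \<le> q"
  shows "A - lead_cols U k * (transpose_mat (lead_cols U k) * A) = U * (tail_proj q k * (transpose_mat U * A))"
proof -
  define Uk where "Uk = lead_cols U k"
  define M where "M = transpose_mat U * A"
  have Uk: "Uk \<in> carrier_mat q k" unfolding Uk_def using U by simp
  have M: "M \<in> carrier_mat q s" unfolding M_def using U A by simp
  have "U * transpose_mat U = 1\<^sub>m q"
    using U by (rule_tac mat_mult_left_right_inverse) auto
  then have A_UM: "A = U * M"
    unfolding M_def using U A by (simp add: assoc_mult_mat[symmetric, of U q q _ q A s])
  have "A - Uk * (transpose_mat Uk * A) = U * (tail_proj q k * M)"
  proof (rule eq_matI)
    fix a b assume "a < dim_row (U * (tail_proj q k * M))" "b < dim_col (U * (tail_proj q k * M))"
    then have ab: "a < q" "b < s" using U M by auto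
    have UkA: "(transpose_mat Uk * A) $$ (i,b) = M $$ (i,b)" if "i < k" for i
      using that ab k U A unfolding Uk_def M_def lead_cols_def
      by (simp add: index_mult_mat_sum[of _ k q _ s] index_mult_mat_sum[of _ q q _ s] del: index_mult_mat(1))
    have "(Uk * (transpose_mat Uk * A)) $$ (a,b) = (\<Sum>i<k. Uk $$ (a,i) * (transpose_mat Uk * A) $$ (i,b))"
      using Uk A ab by (intro index_mult_mat_sum) auto
    also have "\<dots> = (\<Sum>i<k. U $$ (a,i) * M $$ (i,b))"
      using ab k U UkA by (intro sum.cong refl) (simp add: Uk_def lead_cols_def)
    finally have lead: "(Uk * (transpose_mat Uk * A)) $$ (a,b) = (\<Sum>i<k. U $$ (a,i) * M $$ (i,b))" .
    have "A $$ (a,b) = (\<Sum>i<q. U $$ (a,i) * M $$ (i,b))"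
      unfolding A_UM using U M ab by (intro index_mult_mat_sum) auto
    also have "\<dots> = (\<Sum>i<k. U $$ (a,i) * M $$ (i,b)) + (\<Sum>i\<in>{k..<q}. U $$ (a,i) * M $$ (i,b))"
      using sum.atLeastLessThan_concat[of 0 k q, symmetric] k by (simp add: lessThan_atLeast0)
    finally have split: "A $$ (a,b) = (\<Sum>i<k. U $$ (a,i) * M $$ (i,b)) + (\<Sum>i\<in>{k..<q}. U $$ (a,i) * M $$ (i,b))" .
    have "(U * (tail_proj q k * M)) $$ (a,b) = (\<Sum>i<q. U $$ (a,i) * (tail_proj q k * M) $$ (i,b))"
      using U M ab by (intro index_mult_mat_sum) auto
    also have "\<dots> = (\<Sum>i<q. if k \<le> i then U $$ (a,i) * M $$ (i,b) else 0)"
      using ab M by (intro sum.cong refl) (simp add: index_tail_proj_mult del: index_mult_mat(1))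
    finally have tail: "(U * (tail_proj q k * M)) $$ (a,b) = (\<Sum>i\<in>{k..<q}. U $$ (a,i) * M $$ (i,b))"
      by (simp add: sum_if_le_eq_atLeastLessThan)
    show "(A - Uk * (transpose_mat Uk * A)) $$ (a,b) = (U * (tail_proj q k * M)) $$ (a,b)"
      using ab A Uk lead split tail by simp
  qed (use U M A Uk mult_carrier_mat[OF tail_proj_carrier M] in auto)
  then show ?thesis unfolding Uk_def M_def .
qed

lemma frob_inner_tail_proj_diag:
  assumes D: "D \<in> carrier_mat q s" and diag: "\<And>i j. i < q \<Longrightarrow> j < s \<Longrightarrow> i \<noteq> j \<Longrightarrow> D $$ (i,j) = 0"
  shows "frob_inner (tail_proj q k * D) (tail_proj q k * D) = (\<Sum>i\<in>{k..<q}. (sing_val D i)\<^sup>2)"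
proof -
  have row: "(\<Sum>j<s. D $$ (i,j) * D $$ (i,j)) = (sing_val D i)\<^sup>2" if "i < q" for i
  proof -
    have "(\<Sum>j<s. D $$ (i,j) * D $$ (i,j)) = (\<Sum>j<s. if j = i then D $$ (i,i) * D $$ (i,i) else 0)"
      using diag that by (intro sum.cong refl) auto
    then show ?thesis using that D by (simp add: sing_val_def power2_eq_square)
  qed
  have "frob_inner (tail_proj q k * D) (tail_proj q k * D)
      = (\<Sum>i<q. \<Sum>j<s. (tail_proj q k * D) $$ (i,j) * (tail_proj q k * D) $$ (i,j))"
    unfolding frob_inner_def using D by (simp del: index_mult_mat(1))
  also have "\<dots> = (\<Sum>i<q. if k \<le> i then (\<Sum>j<s. D $$ (i,j) * D $$ (i,j)) else 0)"
    using D by (intro sum.cong refl) (simp add: index_tail_proj_mult del: index_mult_mat(1))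
  also have "\<dots> = (\<Sum>i<q. if k \<le> i then (sing_val D i)\<^sup>2 else 0)"
    using row by (intro sum.cong refl) simp
  finally show ?thesis by (simp add: sum_if_le_eq_atLeastLessThan)
qed

lemma svd_lead_cols_residual:
  assumes svd: "is_svd A U D V" and A: "A \<in> carrier_mat q s" and k: "k \<le> q"
  shows "frob_norm (A - lead_cols U k * (transpose_mat (lead_cols U k) * A))
    = sqrt (\<Sum>i\<in>{k..<q}. (sing_val D i)\<^sup>2)"
proof -
  note U = is_svdD(1,2)[OF svd A] and V = is_svdD(3,4)[OF svd A] and D = is_svdD(5)[OF svd A]
  have "transpose_mat U * A = D * transpose_mat V"
    unfolding is_svdD(7)[OF svd A] using U V D
    by (simp add: assoc_mult_mat[of _ q q _ s _ s] assoc_mult_mat[of _ q q _ q _ s, symmetric])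
  then have "A - lead_cols U k * (transpose_mat (lead_cols U k) * A)
      = U * (tail_proj q k * D) * transpose_mat V"
    using lead_cols_proj_residual[OF U A k] U V D mult_carrier_mat[OF tail_proj_carrier D]
    by (simp add: assoc_mult_mat[of "tail_proj q k" q q D s "transpose_mat V" s]
        assoc_mult_mat[of U q q "tail_proj q k * D" s "transpose_mat V" s])
  then show ?thesis
    using frob_norm_orthogonal_mult[OF U V mult_carrier_mat[OF tail_proj_carrier D]]
      frob_inner_tail_proj_diag[OF D is_svdD(6)[OF svd A]]
    by (simp add: frob_norm_def)
qed

lemma svd_lead_cols_residual_right:
  assumes svd: "is_svd A U D V" and A: "A \<in> carrier_mat q s" and k: "k \<le> s"
  shows "frob_norm (A - A * (lead_cols V k * transpose_mat (lead_cols V k)))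
    = sqrt (\<Sum>j\<in>{k..<s}. (sing_val D j)\<^sup>2)"
proof -
  define Vk where "Vk = lead_cols V k"
  have Vk: "Vk \<in> carrier_mat s k" unfolding Vk_def using is_svdD(3)[OF svd A] by simp
  have "transpose_mat (A * (Vk * transpose_mat Vk)) = Vk * transpose_mat Vk * transpose_mat A"
    using A Vk by (simp add: transpose_mult[of A q s _ s] transpose_mult[of Vk s k _ s])
  also have "\<dots> = Vk * (transpose_mat Vk * transpose_mat A)"
    using A Vk by (simp add: assoc_mult_mat[of Vk s k _ s _ q])
  finally have "transpose_mat (A - A * (Vk * transpose_mat Vk))
      = transpose_mat A - Vk * (transpose_mat Vk * transpose_mat A)"
    using A Vk by (simp add: transpose_minus[of A q s])
  then show ?thesis
    using svd_lead_cols_residual[OF is_svd_transpose[OF svd] _ k] A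
    unfolding Vk_def by (simp add: frob_norm_transpose[symmetric, of "A - _"] sing_val_transpose)
qed

section \<open>Removing the initial-value column\<close>

lemma mult_outer_first_col:
  fixes M Y :: "real mat"
  assumes M: "M \<in> carrier_mat r q" and Y: "Y \<in> carrier_mat q n" and n: "0 < n"
  shows "M * mat q s (\<lambda>(i,j). Y $$ (i,0) * w j) = mat r s (\<lambda>(i,j). (M * Y) $$ (i,0) * w j)"
  using M Y n carrier_matD[OF M]
  by (intro eq_matI) (auto simp: index_mult_mat_sum[of _ r q _ s] index_mult_mat_sum[of M r q Y n]
      sum_distrib_right mult.assoc simp del: index_mult_mat(1))

lemma zero_first_col_mult:
  fixes X B :: "real mat"
  assumes X: "X \<in> carrier_mat q s" and B: "B \<in> carrier_mat s s'" and s: "0 < s"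
  shows "zero_first_col X * B = X * B - mat q s' (\<lambda>(i,j). X $$ (i,0) * B $$ (0,j))"
proof (rule eq_matI)
  fix a b assume "a < dim_row (X * B - mat q s' (\<lambda>(i,j). X $$ (i,0) * B $$ (0,j)))"
    "b < dim_col (X * B - mat q s' (\<lambda>(i,j). X $$ (i,0) * B $$ (0,j)))"
  then have ab: "a < q" "b < s'" by auto
  have "(zero_first_col X * B) $$ (a,b) = (\<Sum>j<s. (if j = 0 then 0 else X $$ (a,j)) * B $$ (j,b))"
    using X B ab unfolding zero_first_col_def
    by (simp add: index_mult_mat_sum[of _ q s _ s'] del: index_mult_mat(1))
  also have "\<dots> = (\<Sum>j<s. X $$ (a,j) * B $$ (j,b) - (if j = 0 then X $$ (a,0) * B $$ (0,b) else 0))"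
    by (intro sum.cong) auto
  also have "\<dots> = (\<Sum>j<s. X $$ (a,j) * B $$ (j,b)) - X $$ (a,0) * B $$ (0,b)"
    using s by (simp add: sum_subtractf)
  finally show "(zero_first_col X * B) $$ (a,b) = (X * B - mat q s' (\<lambda>(i,j). X $$ (i,0) * B $$ (0,j))) $$ (a,b)"
    using X B ab by (simp add: index_mult_mat_sum[of _ q s _ s'] del: index_mult_mat(1))
qed (use X B in \<open>auto simp: zero_first_col_def\<close>)

definition prepend_col :: "(nat \<Rightarrow> 'a) \<Rightarrow> 'a mat \<Rightarrow> nat \<Rightarrow> 'a mat" where
  "prepend_col u V k = mat (dim_row V) k (\<lambda>(j,l). if l = 0 then u j else V $$ (j, l - 1))"

lemma prepend_col_carrier [simp]: "V \<in> carrier_mat n n' \<Longrightarrow> prepend_col u V k \<in> carrier_mat n k"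
  unfolding prepend_col_def by simp

text \<open>The rank-one part k0 u^T is reproduced exactly by the prepended column u, so only the
  remaining part K0 has to be approximated by the other columns.\<close>
lemma prepend_col_approx:
  fixes P K V :: "real mat" and k0 u :: "nat \<Rightarrow> real"
  assumes P: "P \<in> carrier_mat q n" and K: "K \<in> carrier_mat n s" and V: "V \<in> carrier_mat s s"
    and sh: "1 \<le> sh" and K0_def: "K0 = K - mat n s (\<lambda>(i,j). k0 i * u j)"
    and Vr_def: "Vr = lead_cols V (sh - 1)"
  obtains C where "C \<in> carrier_mat n sh"
    "P * K - P * C * transpose_mat (prepend_col u V sh) = P * K0 - P * K0 * (Vr * transpose_mat Vr)"
proof -
  define \<kappa> where "\<kappa> = mat n s (\<lambda>(i,j). k0 i * u j)"
  define C where "C = mat n sh (\<lambda>(i,l). if l = 0 then k0 i else (K0 * Vr) $$ (i, l - 1))"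
  have Vr: "Vr \<in> carrier_mat s (sh - 1)" unfolding Vr_def using V by simp
  have K0: "K0 \<in> carrier_mat n s" unfolding K0_def by (rule minus_carrier_mat) simp
  have \<kappa>: "\<kappa> \<in> carrier_mat n s" unfolding \<kappa>_def by simp
  have C: "C \<in> carrier_mat n sh" unfolding C_def by simp
  have U: "transpose_mat (prepend_col u V sh) \<in> carrier_mat sh s"
    unfolding prepend_col_def using V by simp
  have CU: "C * transpose_mat (prepend_col u V sh) = \<kappa> + K0 * (Vr * transpose_mat Vr)"
  proof (rule eq_matI)
    fix i b assume "i < dim_row (\<kappa> + K0 * (Vr * transpose_mat Vr))"
      "b < dim_col (\<kappa> + K0 * (Vr * transpose_mat Vr))"
    then have ib: "i < n" "b < s" using carrier_matD[OF K0] carrier_matD[OF Vr] by auto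
    obtain r where r: "sh = Suc r" using sh by (cases sh) auto
    have "(C * transpose_mat (prepend_col u V sh)) $$ (i,b)
        = (\<Sum>l<Suc r. C $$ (i,l) * prepend_col u V sh $$ (b,l))"
      using C U ib V unfolding r by (simp add: index_mult_mat_sum[of _ n "Suc r" _ s] prepend_col_def
          del: index_mult_mat(1))
    also have "\<dots> = k0 i * u b + (\<Sum>l<r. (K0 * Vr) $$ (i,l) * Vr $$ (b,l))"
      unfolding sum.lessThan_Suc_shift using ib V r by (simp add: C_def prepend_col_def Vr_def lead_cols_def)
    also have "(\<Sum>l<r. (K0 * Vr) $$ (i,l) * Vr $$ (b,l)) = (K0 * Vr * transpose_mat Vr) $$ (i,b)"
      using K0 Vr ib r by (simp add: index_mult_mat_sum[of "K0 * Vr" n r _ s] del: index_mult_mat(1))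
    also have "K0 * Vr * transpose_mat Vr = K0 * (Vr * transpose_mat Vr)"
      using K0 Vr by (simp add: assoc_mult_mat[of K0 n s Vr "sh - 1" _ s])
    finally show "(C * transpose_mat (prepend_col u V sh)) $$ (i,b) = (\<kappa> + K0 * (Vr * transpose_mat Vr)) $$ (i,b)"
      using ib K0 Vr \<kappa> by (simp add: \<kappa>_def del: index_mult_mat(1))
  qed (use \<kappa> C U K0 Vr in auto)
  have "P * C * transpose_mat (prepend_col u V sh) = P * \<kappa> + P * K0 * (Vr * transpose_mat Vr)"
    using P C U K0 Vr \<kappa>
    by (simp add: assoc_mult_mat[of P q n C sh _ s] CU mult_add_distrib_mat[of P q n]
        assoc_mult_mat[of P q n K0 s _ s])
  moreover have "P * K0 = P * K - P * \<kappa>"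
    unfolding K0_def \<kappa>_def[symmetric] using P K \<kappa> by (simp add: mult_minus_distrib_mat[of P q n])
  ultimately have "P * K - P * C * transpose_mat (prepend_col u V sh) = P * K0 - P * K0 * (Vr * transpose_mat Vr)"
    using P K K0 Vr \<kappa> by (intro eq_matI) auto
  with C show ?thesis by (rule that)
qed

lemma prepend_col_svd_residual:
  fixes P K :: "real mat" and k0 u :: "nat \<Rightarrow> real"
  assumes P: "P \<in> carrier_mat q n" and K: "K \<in> carrier_mat n s" and sh: "1 \<le> sh" "sh \<le> s"
    and svd: "is_svd (P * (K - mat n s (\<lambda>(i,j). k0 i * u j))) U D V"
  obtains C where "C \<in> carrier_mat n sh"
    "frob_norm (P * K - P * C * transpose_mat (prepend_col u V sh))
      = sqrt (\<Sum>j\<in>{sh - 1..<s}. (sing_val D j)\<^sup>2)"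
proof -
  define K0 where "K0 = K - mat n s (\<lambda>(i,j). k0 i * u j)"
  have PK0: "P * K0 \<in> carrier_mat q s"
    unfolding K0_def using mult_carrier_mat[OF P minus_carrier_mat[of _ n s K]] by simp
  have V: "V \<in> carrier_mat s s" using is_svdD(3)[OF svd[folded K0_def] PK0] .
  obtain C where C: "C \<in> carrier_mat n sh"
    and wit: "P * K - P * C * transpose_mat (prepend_col u V sh)
      = P * K0 - P * K0 * (lead_cols V (sh - 1) * transpose_mat (lead_cols V (sh - 1)))"
    by (rule prepend_col_approx[OF P K V sh(1) K0_def refl])
  show thesis
    using that[OF C] svd_lead_cols_residual_right[OF svd[folded K0_def] PK0] sh unfolding wit by simp
qed

section \<open>Space-time functions with coefficient matrices\<close>

lemma set_integrable_sum_fun: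
  fixes f :: "'i \<Rightarrow> 'a \<Rightarrow> real"
  shows "(\<And>i. i \<in> I \<Longrightarrow> set_integrable M A (f i)) \<Longrightarrow> set_integrable M A (\<lambda>x. \<Sum>i\<in>I. f i x)"
  unfolding set_integrable_def by (simp add: sum_distrib_left)

lemma set_integral_sum_fun:
  fixes f :: "'i \<Rightarrow> 'a \<Rightarrow> real"
  shows "(\<And>i. i \<in> I \<Longrightarrow> set_integrable M A (f i)) \<Longrightarrow>
    (LINT x:A|M. (\<Sum>i\<in>I. f i x)) = (\<Sum>i\<in>I. LINT x:A|M. f i x)"
  unfolding set_integrable_def set_lebesgue_integral_def by (simp add: sum_distrib_left integral_sum)

lemma set_integral_sum4:
  fixes f :: "nat \<Rightarrow> nat \<Rightarrow> nat \<Rightarrow> nat \<Rightarrow> 'a \<Rightarrow> real"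
  assumes "\<And>i j k l. i \<in> I \<Longrightarrow> j \<in> J \<Longrightarrow> k \<in> K \<Longrightarrow> l \<in> L \<Longrightarrow> set_integrable M A (f i j k l)"
  shows "(LINT x:A|M. (\<Sum>i\<in>I. \<Sum>j\<in>J. \<Sum>k\<in>K. \<Sum>l\<in>L. f i j k l x))
     = (\<Sum>i\<in>I. \<Sum>j\<in>J. \<Sum>k\<in>K. \<Sum>l\<in>L. LINT x:A|M. f i j k l x)"
  using assms by (simp add: set_integral_sum_fun set_integrable_sum_fun)

lemma set_integrable_mult_square_integrable:
  fixes f g :: "'a::euclidean_space \<Rightarrow> real"
  assumes S: "S \<in> sets lborel" and f: "f \<in> borel_measurable lborel" and g: "g \<in> borel_measurable lborel"
    and f2: "set_integrable lborel S (\<lambda>x. (f x)\<^sup>2)" and g2: "set_integrable lborel S (\<lambda>x. (g x)\<^sup>2)"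
  shows "set_integrable lborel S (\<lambda>x. f x * g x)"
proof (rule set_integrable_bound[OF set_integral_add(1)[OF f2 g2]])
  show "set_borel_measurable lborel S (\<lambda>x. f x * g x)"
    unfolding set_borel_measurable_def
    by (intro borel_measurable_scaleR borel_measurable_indicator borel_measurable_times f g S)
  have "\<bar>a * b\<bar> \<le> a\<^sup>2 + b\<^sup>2" for a b :: real
  proof -
    have "2 * (\<bar>a\<bar> * \<bar>b\<bar>) \<le> a\<^sup>2 + b\<^sup>2"
      using sum_squares_bound[of "\<bar>a\<bar>" "\<bar>b\<bar>"] by (simp add: mult.assoc)
    moreover have "0 \<le> \<bar>a\<bar> * \<bar>b\<bar>" by simp
    ultimately show ?thesis unfolding abs_mult by linarith
  qed
  then show "AE x in lborel. x \<in> S \<longrightarrow> norm (f x * g x) \<le> norm ((f x)\<^sup>2 + (g x)\<^sup>2)"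
    by (auto intro!: AE_I2 simp del: abs_mult)
qed

lemma ip_SY_mat_to_fun:
  fixes \<Omega> :: "'d::euclidean_space set" and A B :: "real mat"
  assumes psi: "\<forall>j<s. \<psi> j \<in> borel_measurable lborel \<and> set_integrable lborel {0..T} (\<lambda>t. (\<psi> j t)\<^sup>2)"
    and nu: "\<forall>i<q. \<nu> i \<in> borel_measurable lborel \<and> set_integrable lborel \<Omega> (\<lambda>\<xi>. (\<nu> i \<xi>)\<^sup>2)"
    and Om: "\<Omega> \<in> sets lborel" and A: "A \<in> carrier_mat q s" and B: "B \<in> carrier_mat q s"
  shows "ip_SY T \<Omega> (mat_to_fun \<nu> \<psi> A) (mat_to_fun \<nu> \<psi> B)
    = frob_inner A (gram_Om \<Omega> q \<nu> * B * gram_T T s \<psi>)"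
proof -
  have expand: "mat_to_fun \<nu> \<psi> C = (\<lambda>t \<xi>. \<Sum>i<q. \<Sum>j<s. C $$ (i,j) * \<nu> i \<xi> * \<psi> j t)"
    if "C \<in> carrier_mat q s" for C :: "real mat" using that unfolding mat_to_fun_def by auto
  have nu_int: "set_integrable lborel \<Omega> (\<lambda>\<xi>. \<nu> i \<xi> * \<nu> k \<xi>)" if "i < q" "k < q" for i k
    using nu that by (intro set_integrable_mult_square_integrable Om) auto
  have psi_int: "set_integrable lborel {0..T} (\<lambda>t. \<psi> j t * \<psi> l t)" if "j < s" "l < s" for j l
    using psi that by (intro set_integrable_mult_square_integrable) auto
  have inner: "(LINT \<xi>:\<Omega>|lborel. mat_to_fun \<nu> \<psi> A t \<xi> * mat_to_fun \<nu> \<psi> B t \<xi>) =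
     (\<Sum>i<q. \<Sum>k<q. \<Sum>j<s. \<Sum>l<s. (A $$ (i,j) * B $$ (k,l) * ip_Om \<Omega> (\<nu> i) (\<nu> k)) * (\<psi> j t * \<psi> l t))"
    for t
  proof -
    have "(LINT \<xi>:\<Omega>|lborel. mat_to_fun \<nu> \<psi> A t \<xi> * mat_to_fun \<nu> \<psi> B t \<xi>) =
      (LINT \<xi>:\<Omega>|lborel. (\<Sum>i<q. \<Sum>k<q. \<Sum>j<s. \<Sum>l<s.
         (A $$ (i,j) * B $$ (k,l) * \<psi> j t * \<psi> l t) * (\<nu> i \<xi> * \<nu> k \<xi>)))"
      unfolding expand[OF A] expand[OF B] by (simp add: sum_product mult_ac)
    also have "\<dots> = (\<Sum>i<q. \<Sum>k<q. \<Sum>j<s. \<Sum>l<s.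
        LINT \<xi>:\<Omega>|lborel. (A $$ (i,j) * B $$ (k,l) * \<psi> j t * \<psi> l t) * (\<nu> i \<xi> * \<nu> k \<xi>))"
      by (rule set_integral_sum4) (auto intro: nu_int)
    finally show ?thesis
      unfolding ip_Om_def by (simp only: set_integral_mult_right) (simp add: mult_ac)
  qed
  have "ip_SY T \<Omega> (mat_to_fun \<nu> \<psi> A) (mat_to_fun \<nu> \<psi> B) =
     (\<Sum>i<q. \<Sum>k<q. \<Sum>j<s. \<Sum>l<s. LINT t:{0..T}|lborel.
        (A $$ (i,j) * B $$ (k,l) * ip_Om \<Omega> (\<nu> i) (\<nu> k)) * (\<psi> j t * \<psi> l t))"
    unfolding ip_SY_def inner by (rule set_integral_sum4) (auto intro: psi_int)
  also have "\<dots> = (\<Sum>i<q. \<Sum>k<q. \<Sum>j<s. \<Sum>l<s.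
      A $$ (i,j) * (ip_Om \<Omega> (\<nu> i) (\<nu> k) * B $$ (k,l) * ip_T T (\<psi> l) (\<psi> j)))"
    unfolding ip_T_def by (simp only: set_integral_mult_right) (simp add: mult_ac)
  also have "\<dots> = (\<Sum>i<q. \<Sum>j<s. \<Sum>k<q. \<Sum>l<s.
      A $$ (i,j) * (ip_Om \<Omega> (\<nu> i) (\<nu> k) * B $$ (k,l) * ip_T T (\<psi> l) (\<psi> j)))"
    by (rule sum.cong[OF refl], rule sum.swap)
  also have "\<dots> = frob_inner A (gram_Om \<Omega> q \<nu> * B * gram_T T s \<psi>)"
    using A B unfolding frob_inner_def gram_Om_def gram_T_def
    by (auto simp: index_mult3_mat_sum[of _ q q _ s _ s] sum_distrib_left simp del: index_mult_mat(1)
        intro!: sum.cong)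
  finally show ?thesis .
qed

lemma mat_to_fun_minus:
  fixes A B :: "real mat"
  assumes "A \<in> carrier_mat q s" "B \<in> carrier_mat q s"
  shows "mat_to_fun \<nu> \<psi> A - mat_to_fun \<nu> \<psi> B = mat_to_fun \<nu> \<psi> (A - B)"
  using assms unfolding mat_to_fun_def fun_diff_def
  by (intro ext) (auto simp: sum_subtractf[symmetric] left_diff_distrib intro!: sum.cong)

lemma lin_comb_one_mat:
  assumes "l < n"
  shows "(\<lambda>x. \<Sum>j<n. (1\<^sub>m n :: real mat) $$ (l,j) * f j x) = f l"
proof
  fix x
  have "(\<Sum>j<n. (1\<^sub>m n :: real mat) $$ (l,j) * f j x) = (\<Sum>j<n. if l = j then f j x else 0)"
    using assms by (intro sum.cong) auto
  then show "(\<Sum>j<n. (1\<^sub>m n :: real mat) $$ (l,j) * f j x) = f l x" using assms by simp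
qed

lemma prod_span_lin_comb:
  fixes W W' :: "real mat"
  assumes W: "W \<in> carrier_mat n q" and W': "W' \<in> carrier_mat m s"
    and \<nu>h: "\<And>k. k < n \<Longrightarrow> \<nu>h k = (\<lambda>\<xi>. \<Sum>i<q. W $$ (k,i) * \<nu> i \<xi>)"
    and \<psi>h: "\<And>l. l < m \<Longrightarrow> \<psi>h l = (\<lambda>t. \<Sum>j<s. W' $$ (l,j) * \<psi> j t)"
  shows "prod_span n \<nu>h m \<psi>h = mat_to_fun \<nu> \<psi> ` {transpose_mat W * C * W' | C. C \<in> carrier_mat n m}"
proof -
  have comb: "(\<lambda>t \<xi>. \<Sum>k<n. \<Sum>l<m. C $$ (k,l) * \<nu>h k \<xi> * \<psi>h l t)
      = mat_to_fun \<nu> \<psi> (transpose_mat W * C * W')" if C: "C \<in> carrier_mat n m" for C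
  proof (intro ext)
    fix t \<xi>
    have "(\<Sum>k<n. \<Sum>l<m. C $$ (k,l) * \<nu>h k \<xi> * \<psi>h l t)
        = (\<Sum>k<n. \<Sum>l<m. \<Sum>i<q. \<Sum>j<s. W $$ (k,i) * C $$ (k,l) * W' $$ (l,j) * \<nu> i \<xi> * \<psi> j t)"
      using \<nu>h \<psi>h by (simp add: sum_distrib_left sum_distrib_right mult_ac)
    also have "\<dots> = (\<Sum>i<q. \<Sum>j<s. \<Sum>k<n. \<Sum>l<m. W $$ (k,i) * C $$ (k,l) * W' $$ (l,j) * \<nu> i \<xi> * \<psi> j t)"
      by (rule sum_swap_pairs)
    also have "\<dots> = mat_to_fun \<nu> \<psi> (transpose_mat W * C * W') t \<xi>"
      using W W' C unfolding mat_to_fun_def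
      by (auto simp: index_mult3_mat_sum[of _ q n _ m _ s] sum_distrib_right simp del: index_mult_mat(1)
          intro!: sum.cong)
    finally show "(\<Sum>k<n. \<Sum>l<m. C $$ (k,l) * \<nu>h k \<xi> * \<psi>h l t) = mat_to_fun \<nu> \<psi> (transpose_mat W * C * W') t \<xi>" .
  qed
  show ?thesis
  proof (intro equalityI subsetI)
    fix x assume "x \<in> prod_span n \<nu>h m \<psi>h"
    then obtain c where x: "x = (\<lambda>t \<xi>. \<Sum>k<n. \<Sum>l<m. c k l * \<nu>h k \<xi> * \<psi>h l t)"
      unfolding prod_span_def by auto
    have "x = (\<lambda>t \<xi>. \<Sum>k<n. \<Sum>l<m. mat n m (\<lambda>(k,l). c k l) $$ (k,l) * \<nu>h k \<xi> * \<psi>h l t)"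
      unfolding x by (intro ext sum.cong refl) auto
    moreover have "mat n m (\<lambda>(k,l). c k l) \<in> carrier_mat n m" by simp
    ultimately show "x \<in> mat_to_fun \<nu> \<psi> ` {transpose_mat W * C * W' | C. C \<in> carrier_mat n m}"
      using comb by blast
  next
    fix x assume "x \<in> mat_to_fun \<nu> \<psi> ` {transpose_mat W * C * W' | C. C \<in> carrier_mat n m}"
    then obtain C where "C \<in> carrier_mat n m" "x = mat_to_fun \<nu> \<psi> (transpose_mat W * C * W')" by auto
    then show "x \<in> prod_span n \<nu>h m \<psi>h"
      unfolding prod_span_def by (auto simp: comb[symmetric])
  qed
qed

section \<open>Coordinates in orthonormal bases and the two reduction orders\<close>

locale gram_factors =
  fixes T :: real and \<Omega> :: "'d::euclidean_space set" and \<psi> :: "nat \<Rightarrow> real \<Rightarrow> real"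
    and \<nu> :: "nat \<Rightarrow> 'd \<Rightarrow> real" and q s :: nat and LS LY :: "real mat"
  assumes psi_L2: "\<forall>j<s. \<psi> j \<in> borel_measurable lborel \<and> set_integrable lborel {0..T} (\<lambda>t. (\<psi> j t)\<^sup>2)"
    and nu_L2: "\<forall>i<q. \<nu> i \<in> borel_measurable lborel \<and> set_integrable lborel \<Omega> (\<lambda>\<xi>. (\<nu> i \<xi>)\<^sup>2)"
    and Om: "\<Omega> \<in> sets lborel"
    and LS: "LS \<in> carrier_mat s s" "invertible_mat LS" "gram_T T s \<psi> = LS * transpose_mat LS"
    and LY: "LY \<in> carrier_mat q q" "invertible_mat LY" "gram_Om \<Omega> q \<nu> = LY * transpose_mat LY"
begin

text \<open>coords X holds the coefficients of mat_to_fun \<nu> \<psi> X with respect to the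
  L2-orthonormal bases given by the inverses of LY and LS applied to \<nu> and \<psi>.\<close>
definition coords :: "real mat \<Rightarrow> real mat" where
  "coords X = transpose_mat LY * X * LS"

lemma dim_coords [simp]: "dim_row (coords X) = q" "dim_col (coords X) = s"
  unfolding coords_def using LS(1) LY(1) by auto

lemma coords_minus_carrier: "coords X - coords Y \<in> carrier_mat q s"
  by (rule minus_carrier_mat, rule carrier_matI) simp_all

lemma coords_carrier [simp]: "X \<in> carrier_mat q s \<Longrightarrow> coords X \<in> carrier_mat q s"
  unfolding coords_def using LS(1) LY(1) by (meson mult_carrier_mat transpose_carrier_mat)

lemma minv_LY: "minv LY \<in> carrier_mat q q" "LY * minv LY = 1\<^sub>m q" "minv LY * LY = 1\<^sub>m q"
  using minv_mat[OF LY(2,1)] by auto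

lemma minv_LS: "minv LS \<in> carrier_mat s s" "LS * minv LS = 1\<^sub>m s" "minv LS * LS = 1\<^sub>m s"
  using minv_mat[OF LS(2,1)] by auto

lemma coords_minus:
  assumes "A \<in> carrier_mat q s" "B \<in> carrier_mat q s"
  shows "coords (A - B) = coords A - coords B"
  unfolding coords_def using assms LS LY
  by (simp add: mult_minus_distrib_mat[of _ q q _ s] minus_mult_distrib_mat[of _ q s _ _ s])

lemma coords_inj:
  assumes A: "A \<in> carrier_mat q s" and B: "B \<in> carrier_mat q s" and eq: "coords A = coords B"
  shows "A = B"
proof -
  have LYt: "transpose_mat (minv LY) * transpose_mat LY = 1\<^sub>m q"
    using transpose_mult[of LY q q "minv LY" q] minv_LY LY by simp
  have "transpose_mat (minv LY) * coords X * minv LS = X" if X: "X \<in> carrier_mat q s" for X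
  proof -
    have "transpose_mat (minv LY) * coords X * minv LS
        = transpose_mat (minv LY) * transpose_mat LY * X * (LS * minv LS)"
      unfolding coords_def using minv_LY minv_LS LY LS X
      by (intro assoc_mult_mat5[of _ q q _ q _ s _ s _ s]) auto
    also have "\<dots> = X" using LYt minv_LS X by simp
    finally show ?thesis .
  qed
  from this[OF A] this[OF B] eq show ?thesis by metis
qed

lemma ip_SY_coords:
  assumes A: "A \<in> carrier_mat q s" and B: "B \<in> carrier_mat q s"
  shows "ip_SY T \<Omega> (mat_to_fun \<nu> \<psi> A) (mat_to_fun \<nu> \<psi> B) = frob_inner (coords A) (coords B)"
proof -
  have "LY * coords B * transpose_mat LS = LY * transpose_mat LY * B * (LS * transpose_mat LS)"
    unfolding coords_def using LY LS B by (intro assoc_mult_mat5[of _ q q _ q _ s _ s _ s]) auto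
  then show ?thesis
    using A B LY LS
    by (simp add: ip_SY_mat_to_fun[OF psi_L2 nu_L2 Om A B] coords_def[of A]
        frob_inner_mult[of _ q q _ s _ s] LS(3) LY(3))
qed

lemma norm_SY_coords:
  assumes "A \<in> carrier_mat q s" "B \<in> carrier_mat q s"
  shows "norm_SY T \<Omega> (mat_to_fun \<nu> \<psi> A - mat_to_fun \<nu> \<psi> B) = frob_norm (coords A - coords B)"
  using assms unfolding norm_SY_def frob_norm_def
  by (simp add: mat_to_fun_minus ip_SY_coords coords_minus minus_carrier_mat)

lemma coeff_mat_mat_to_fun:
  assumes A: "A \<in> carrier_mat q s"
  shows "coeff_mat q s \<nu> \<psi> (mat_to_fun \<nu> \<psi> A) = A"
  unfolding coeff_mat_def
proof (rule the_equality)
  fix X assume "X \<in> carrier_mat q s \<and> mat_to_fun \<nu> \<psi> A = mat_to_fun \<nu> \<psi> X"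
  then have X: "X \<in> carrier_mat q s" and eq: "mat_to_fun \<nu> \<psi> A = mat_to_fun \<nu> \<psi> X" by auto
  have AX: "A - X \<in> carrier_mat q s" using minus_carrier_mat[OF X] .
  have "mat_to_fun \<nu> \<psi> (A - X) = (\<lambda>t \<xi>. 0)"
    using mat_to_fun_minus[where \<nu>=\<nu> and \<psi>=\<psi>, OF A X, symmetric] eq by (simp add: fun_diff_def)
  then have "frob_inner (coords (A - X)) (coords (A - X)) = 0"
    using ip_SY_coords[OF AX AX] by (simp add: ip_SY_def)
  from frob_inner_self_eq_0[OF coords_carrier[OF AX] this]
  have "coords A - coords X = 0\<^sub>m q s" using coords_minus[OF A X] by simp
  then have "coords A = coords X"
    using minus_mat_eq_0_imp_eq[OF coords_carrier[OF A] coords_carrier[OF X]] by simp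
  then show "X = A" using coords_inj[OF X A] by simp
qed (use A in simp)

lemma coords_reduced:
  assumes "W \<in> carrier_mat n q" "C \<in> carrier_mat n m" "W' \<in> carrier_mat m s"
  shows "coords (transpose_mat W * C * W') = (transpose_mat LY * transpose_mat W) * C * (W' * LS)"
  unfolding coords_def using assms LY LS by (intro assoc_mult_mat5[of _ q q _ n _ m _ s _ s]) auto

lemma orthogonal_residual_unique:
  assumes S: "S \<subseteq> carrier_mat q s" and S_minus: "\<And>A A'. A \<in> S \<Longrightarrow> A' \<in> S \<Longrightarrow> A - A' \<in> S"
    and A0: "A0 \<in> S" and A1: "A1 \<in> S"
    and orth0: "\<And>A. A \<in> S \<Longrightarrow> frob_inner (coords B - coords A0) (coords A) = 0"
    and orth1: "\<And>A. A \<in> S \<Longrightarrow> frob_inner (coords B - coords A1) (coords A) = 0"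
  shows "A0 = A1"
proof -
  have A0c: "A0 \<in> carrier_mat q s" and A1c: "A1 \<in> carrier_mat q s" using A0 A1 S by auto
  have A01: "A0 - A1 \<in> S" using S_minus[OF A0 A1] .
  have "coords (A0 - A1) = (coords B - coords A1) - (coords B - coords A0)"
    unfolding coords_minus[OF A0c A1c] by (intro eq_matI) auto
  then have "frob_inner (coords (A0 - A1)) (coords (A0 - A1))
      = frob_inner (coords B - coords A1) (coords (A0 - A1))
        - frob_inner (coords B - coords A0) (coords (A0 - A1))"
    using frob_inner_minus_left[OF coords_minus_carrier coords_minus_carrier
        coords_carrier[OF minus_carrier_mat[OF A1c, of A0]]] by simp
  then have "frob_inner (coords (A0 - A1)) (coords (A0 - A1)) = 0"
    using orth0[OF A01] orth1[OF A01] by simp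
  from frob_inner_self_eq_0[OF coords_carrier[OF minus_carrier_mat[OF A1c, of A0]] this]
  have "coords A0 - coords A1 = 0\<^sub>m q s" unfolding coords_minus[OF A0c A1c] .
  then have "coords A0 = coords A1"
    using minus_mat_eq_0_imp_eq[OF coords_carrier[OF A0c] coords_carrier[OF A1c]] by simp
  then show ?thesis using coords_inj[OF A0c A1c] by simp
qed

lemma orth_proj_mat_to_fun:
  assumes S: "S \<subseteq> carrier_mat q s" and S_minus: "\<And>A A'. A \<in> S \<Longrightarrow> A' \<in> S \<Longrightarrow> A - A' \<in> S"
    and B: "B \<in> carrier_mat q s" and A0: "A0 \<in> S"
    and orth: "\<And>A. A \<in> S \<Longrightarrow> frob_inner (coords B - coords A0) (coords A) = 0"
  shows "orth_proj (ip_SY T \<Omega>) (mat_to_fun \<nu> \<psi> ` S) (mat_to_fun \<nu> \<psi> B) = mat_to_fun \<nu> \<psi> A0"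
    and "\<And>A. A \<in> S \<Longrightarrow> frob_norm (coords B - coords A0) \<le> frob_norm (coords B - coords A)"
proof -
  have ip_res: "ip_SY T \<Omega> (mat_to_fun \<nu> \<psi> B - mat_to_fun \<nu> \<psi> A1) (mat_to_fun \<nu> \<psi> A)
      = frob_inner (coords B - coords A1) (coords A)" if "A1 \<in> S" "A \<in> S" for A1 A
  proof -
    have A1c: "A1 \<in> carrier_mat q s" and Ac: "A \<in> carrier_mat q s" using that S by auto
    show ?thesis
      using mat_to_fun_minus[where \<nu>=\<nu> and \<psi>=\<psi>, OF B A1c] ip_SY_coords[OF minus_carrier_mat[OF A1c, of B] Ac]
        coords_minus[OF B A1c]
      by simp
  qed
  show "orth_proj (ip_SY T \<Omega>) (mat_to_fun \<nu> \<psi> ` S) (mat_to_fun \<nu> \<psi> B) = mat_to_fun \<nu> \<psi> A0"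
    unfolding orth_proj_def
  proof (rule the_equality)
    show "mat_to_fun \<nu> \<psi> A0 \<in> mat_to_fun \<nu> \<psi> ` S
        \<and> (\<forall>z\<in>mat_to_fun \<nu> \<psi> ` S. ip_SY T \<Omega> (mat_to_fun \<nu> \<psi> B - mat_to_fun \<nu> \<psi> A0) z = 0)"
      using A0 orth ip_res by auto
  next
    fix p assume p: "p \<in> mat_to_fun \<nu> \<psi> ` S
        \<and> (\<forall>z\<in>mat_to_fun \<nu> \<psi> ` S. ip_SY T \<Omega> (mat_to_fun \<nu> \<psi> B - p) z = 0)"
    then obtain A1 where A1: "A1 \<in> S" "p = mat_to_fun \<nu> \<psi> A1" by auto
    have "frob_inner (coords B - coords A1) (coords A) = 0" if "A \<in> S" for A
      using p A1 that ip_res[OF A1(1) that] by auto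
    then show "p = mat_to_fun \<nu> \<psi> A0"
      using orthogonal_residual_unique[OF S S_minus A0 A1(1) orth] A1(2) by simp
  qed
  show "frob_norm (coords B - coords A0) \<le> frob_norm (coords B - coords A)" if A: "A \<in> S" for A
  proof -
    have A0c: "A0 \<in> carrier_mat q s" and Ac: "A \<in> carrier_mat q s" using A0 A S by auto
    have "coords B - coords A = (coords B - coords A0) + coords (A0 - A)"
      unfolding coords_minus[OF A0c Ac] by (intro eq_matI) auto
    then show ?thesis
      using frob_norm_le_add_orthogonal[OF coords_minus_carrier coords_carrier[OF minus_carrier_mat[OF Ac, of A0]]
          orth[OF S_minus[OF A0 A]]] by simp
  qed
qed

lemma orth_proj_prod_span:
  fixes W W' B :: "real mat"
  assumes W: "W \<in> carrier_mat n q" and W': "W' \<in> carrier_mat m s" and B: "B \<in> carrier_mat q s"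
    and \<nu>h: "\<And>k. k < n \<Longrightarrow> \<nu>h k = (\<lambda>\<xi>. \<Sum>i<q. W $$ (k,i) * \<nu> i \<xi>)"
    and \<psi>h: "\<And>l. l < m \<Longrightarrow> \<psi>h l = (\<lambda>t. \<Sum>j<s. W' $$ (l,j) * \<psi> j t)"
  obtains C0 where "C0 \<in> carrier_mat n m"
    "orth_proj (ip_SY T \<Omega>) (prod_span n \<nu>h m \<psi>h) (mat_to_fun \<nu> \<psi> B)
      = mat_to_fun \<nu> \<psi> (transpose_mat W * C0 * W')"
    "\<And>C. C \<in> carrier_mat n m \<Longrightarrow> frob_norm (coords B - coords (transpose_mat W * C0 * W'))
      \<le> frob_norm (coords B - transpose_mat LY * transpose_mat W * C * (W' * LS))"
proof -
  define P1 where "P1 = transpose_mat LY * transpose_mat W"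
  define P2 where "P2 = W' * LS"
  define S where "S = {transpose_mat W * C * W' | C. C \<in> carrier_mat n m}"
  have P1: "P1 \<in> carrier_mat q n"
    unfolding P1_def using LY(1) W by (meson mult_carrier_mat transpose_carrier_mat)
  have P2: "P2 \<in> carrier_mat m s" unfolding P2_def using LS(1) W' by (meson mult_carrier_mat)
  have WCW: "transpose_mat W * C * W' \<in> carrier_mat q s" if "C \<in> carrier_mat n m" for C
    using W that W' by (meson mult_carrier_mat transpose_carrier_mat)
  have red: "coords (transpose_mat W * C * W') = P1 * C * P2" if "C \<in> carrier_mat n m" for C
    unfolding P1_def P2_def by (rule coords_reduced[OF W that W'])
  obtain C0 where C0: "C0 \<in> carrier_mat n m"
    and normal: "transpose_mat P1 * (coords B - P1 * C0 * P2) * transpose_mat P2 = 0\<^sub>m n m"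
    using normal_equations_solvable[OF P1 P2 coords_carrier[OF B]] by blast
  have S: "S \<subseteq> carrier_mat q s" unfolding S_def using WCW by auto
  have S_minus: "A - A' \<in> S" if "A \<in> S" "A' \<in> S" for A A'
    using mult3_set_minus_closed[OF W W'] that unfolding S_def .
  have orth: "frob_inner (coords B - coords (transpose_mat W * C0 * W')) (coords A) = 0"
    if A: "A \<in> S" for A
  proof -
    obtain C where C: "C \<in> carrier_mat n m" "A = transpose_mat W * C * W'"
      using A unfolding S_def by blast
    then show ?thesis
      using frob_inner_normal_residual[OF P1 P2 coords_carrier[OF B] C0 C(1) normal] red[OF C0] red[OF C(1)]
      by simp
  qed
  have span: "prod_span n \<nu>h m \<psi>h = mat_to_fun \<nu> \<psi> ` S"
    unfolding S_def using prod_span_lin_comb[OF W W' \<nu>h \<psi>h] by simp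
  have A0: "transpose_mat W * C0 * W' \<in> S" unfolding S_def using C0 by blast
  show thesis
  proof (rule that[OF C0])
    show "orth_proj (ip_SY T \<Omega>) (prod_span n \<nu>h m \<psi>h) (mat_to_fun \<nu> \<psi> B)
        = mat_to_fun \<nu> \<psi> (transpose_mat W * C0 * W')"
      unfolding span using orth_proj_mat_to_fun(1)[OF S S_minus B A0 orth] by simp
    fix C :: "real mat" assume C: "C \<in> carrier_mat n m"
    have "transpose_mat W * C * W' \<in> S" unfolding S_def using C by blast
    then have "frob_norm (coords B - coords (transpose_mat W * C0 * W'))
        \<le> frob_norm (coords B - coords (transpose_mat W * C * W'))"
      using orth_proj_mat_to_fun(2)[OF S S_minus B A0 orth] by blast
    then show "frob_norm (coords B - coords (transpose_mat W * C0 * W'))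
        \<le> frob_norm (coords B - transpose_mat LY * transpose_mat W * C * (W' * LS))"
      using red[OF C] unfolding P1_def P2_def by simp
  qed
qed

text \<open>The coefficient matrices of the reduced bases: the paper's V_qh^T L_Y^-1 and U_sh^T L_S^-1.\<close>
definition space_coeffs :: "real mat \<Rightarrow> nat \<Rightarrow> real mat" where
  "space_coeffs U k = transpose_mat (lead_cols U k) * minv LY"

definition time_coeffs :: "real mat \<Rightarrow> nat \<Rightarrow> real mat" where
  "time_coeffs V k = transpose_mat (prepend_col (\<lambda>j. transpose_mat LS $$ (j,0)) V k) * minv LS"

lemma space_coeffs_carrier: "U \<in> carrier_mat q q \<Longrightarrow> space_coeffs U k \<in> carrier_mat k q"
  unfolding space_coeffs_def using minv_LY(1) by (meson lead_cols_carrier mult_carrier_mat transpose_carrier_mat)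

lemma time_coeffs_carrier: "V \<in> carrier_mat s s \<Longrightarrow> time_coeffs V k \<in> carrier_mat k s"
  unfolding time_coeffs_def using minv_LS(1)
  by (meson prepend_col_carrier mult_carrier_mat transpose_carrier_mat)

lemma red_space_basis_eq:
  "U \<in> carrier_mat q q \<Longrightarrow>
    red_space_basis LY q \<nu> k U = (\<lambda>k' \<xi>. \<Sum>i<q. space_coeffs U k $$ (k',i) * \<nu> i \<xi>)"
  unfolding red_space_basis_def space_coeffs_def lead_cols_def Let_def by simp

lemma red_time_basis_eq:
  "V \<in> carrier_mat s s \<Longrightarrow>
    red_time_basis LS s \<psi> k V = (\<lambda>k' t. \<Sum>j<s. time_coeffs V k $$ (k',j) * \<psi> j t)"
  unfolding red_time_basis_def time_coeffs_def prepend_col_def Let_def by simp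

lemma LY_space_coeffs:
  assumes "U \<in> carrier_mat q q"
  shows "transpose_mat LY * transpose_mat (space_coeffs U k) = lead_cols U k"
proof -
  have Uk: "lead_cols U k \<in> carrier_mat q k" using assms by simp
  have "transpose_mat LY * transpose_mat (minv LY) = 1\<^sub>m q"
    using transpose_mult[of "minv LY" q q LY q] minv_LY LY by simp
  moreover have "transpose_mat (space_coeffs U k) = transpose_mat (minv LY) * lead_cols U k"
    unfolding space_coeffs_def using transpose_mult[of "transpose_mat (lead_cols U k)" k q "minv LY" q]
      Uk minv_LY by simp
  ultimately show ?thesis
    using assoc_mult_mat[of "transpose_mat LY" q q "transpose_mat (minv LY)" q "lead_cols U k" k]
      LY minv_LY Uk by simp
qed

lemma time_coeffs_LS:
  assumes "V \<in> carrier_mat s s"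
  shows "time_coeffs V k * LS = transpose_mat (prepend_col (\<lambda>j. transpose_mat LS $$ (j,0)) V k)"
proof -
  have "transpose_mat (prepend_col (\<lambda>j. transpose_mat LS $$ (j,0)) V k) \<in> carrier_mat k s"
    unfolding prepend_col_def using assms by simp
  then show ?thesis
    unfolding time_coeffs_def using minv_LS LS
    by (simp add: assoc_mult_mat[of _ k s "minv LS" s LS s])
qed

lemma coords_zero_first_col:
  assumes X: "X \<in> carrier_mat q s" and P: "P \<in> carrier_mat q n" and Y: "Y \<in> carrier_mat n s"
    and LYX: "transpose_mat LY * X = P * Y" and s: "0 < s"
  shows "coords (zero_first_col X) = P * (Y * LS - mat n s (\<lambda>(i,j). Y $$ (i,0) * LS $$ (0,j)))"
proof -
  have LYt: "transpose_mat LY \<in> carrier_mat q q" using LY(1) by simp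
  have Zc: "zero_first_col X \<in> carrier_mat q s" using X unfolding zero_first_col_def by auto
  have "coords (zero_first_col X)
      = transpose_mat LY * (X * LS - mat q s (\<lambda>(i,j). X $$ (i,0) * LS $$ (0,j)))"
    unfolding coords_def zero_first_col_mult[OF X LS(1) s, symmetric]
    using LYt Zc LS(1) by (rule assoc_mult_mat)
  also have "\<dots> = transpose_mat LY * X * LS - transpose_mat LY * mat q s (\<lambda>(i,j). X $$ (i,0) * LS $$ (0,j))"
    using LYt X LS(1)
    by (simp add: mult_minus_distrib_mat[of _ q q _ s] assoc_mult_mat[of _ q q X s LS s])
  also have "\<dots> = P * (Y * LS) - P * mat n s (\<lambda>(i,j). Y $$ (i,0) * LS $$ (0,j))"
    unfolding mult_outer_first_col[OF LYt X s] LYX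
    using mult_outer_first_col[OF P Y s] assoc_mult_mat[OF P Y LS(1)] by simp
  also have "\<dots> = P * (Y * LS - mat n s (\<lambda>(i,j). Y $$ (i,0) * LS $$ (0,j)))"
    using P Y LS(1) by (simp add: mult_minus_distrib_mat[of _ q n _ s])
  finally show ?thesis .
qed

lemma space_step:
  fixes X Y W' :: "real mat"
  assumes svd: "is_svd (coords X) U D V" and Y: "Y \<in> carrier_mat q m" and W': "W' \<in> carrier_mat m s"
    and X: "X = Y * W'" and k: "k \<le> q"
    and \<psi>h: "\<And>l. l < m \<Longrightarrow> \<psi>h l = (\<lambda>t. \<Sum>j<s. W' $$ (l,j) * \<psi> j t)"
  obtains C where "C \<in> carrier_mat k m"
    "orth_proj (ip_SY T \<Omega>) (prod_span k (red_space_basis LY q \<nu> k U) m \<psi>h) (mat_to_fun \<nu> \<psi> X)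
      = mat_to_fun \<nu> \<psi> (transpose_mat (space_coeffs U k) * C * W')"
    "frob_norm (coords X - coords (transpose_mat (space_coeffs U k) * C * W'))
      \<le> sqrt (\<Sum>i\<in>{k..<q}. (sing_val D i)\<^sup>2)"
proof -
  have Xc: "X \<in> carrier_mat q s" unfolding X using Y W' by simp
  have U: "U \<in> carrier_mat q q" using is_svdD(1)[OF svd coords_carrier[OF Xc]] .
  define Uk where "Uk = lead_cols U k"
  define K where "K = transpose_mat LY * Y"
  define Q where "Q = W' * LS"
  have Uk: "Uk \<in> carrier_mat q k" unfolding Uk_def using U by simp
  have K: "K \<in> carrier_mat q m" unfolding K_def using LY(1) Y by simp
  have Q: "Q \<in> carrier_mat m s" unfolding Q_def using LS(1) W' by simp
  have \<nu>h: "red_space_basis LY q \<nu> k U k' = (\<lambda>\<xi>. \<Sum>i<q. space_coeffs U k $$ (k',i) * \<nu> i \<xi>)" for k'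
    by (simp add: red_space_basis_eq[OF U])
  obtain C0 where C0: "C0 \<in> carrier_mat k m"
    and proj: "orth_proj (ip_SY T \<Omega>) (prod_span k (red_space_basis LY q \<nu> k U) m \<psi>h) (mat_to_fun \<nu> \<psi> X)
      = mat_to_fun \<nu> \<psi> (transpose_mat (space_coeffs U k) * C0 * W')"
    and best: "\<And>C. C \<in> carrier_mat k m \<Longrightarrow>
      frob_norm (coords X - coords (transpose_mat (space_coeffs U k) * C0 * W'))
      \<le> frob_norm (coords X - transpose_mat LY * transpose_mat (space_coeffs U k) * C * (W' * LS))"
    using orth_proj_prod_span[OF space_coeffs_carrier[OF U] W' Xc \<nu>h \<psi>h] by blast
  have cX: "coords X = K * Q"
    unfolding coords_def X K_def Q_def using LY(1) Y W' LS(1)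
    by (intro assoc_mult_mat4[of _ q q _ m _ s _ s]) auto
  have "Uk * (transpose_mat Uk * K) * Q = Uk * (transpose_mat Uk * coords X)"
    unfolding cX using Uk K Q
    by (simp add: assoc_mult_mat[of Uk q k _ m Q s] assoc_mult_mat[of "transpose_mat Uk" k q K m Q s])
  then have "frob_norm (coords X - Uk * (transpose_mat Uk * K) * Q) = sqrt (\<Sum>i\<in>{k..<q}. (sing_val D i)\<^sup>2)"
    using svd_lead_cols_residual[OF svd coords_carrier[OF Xc] k] unfolding Uk_def by simp
  moreover have "transpose_mat Uk * K \<in> carrier_mat k m" using Uk K by simp
  ultimately show thesis
    using that[OF C0 proj] best[of "transpose_mat Uk * K"]
    unfolding LY_space_coeffs[OF U] Uk_def[symmetric] Q_def[symmetric] by simp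
qed

lemma time_step:
  fixes X Y W :: "real mat"
  assumes svd: "is_svd (coords (zero_first_col X)) U D V" and W: "W \<in> carrier_mat n q"
    and Y: "Y \<in> carrier_mat n s" and X: "X = transpose_mat W * Y" and sh: "1 \<le> sh" "sh \<le> s"
    and \<nu>h: "\<And>k. k < n \<Longrightarrow> \<nu>h k = (\<lambda>\<xi>. \<Sum>i<q. W $$ (k,i) * \<nu> i \<xi>)"
  obtains C where "C \<in> carrier_mat n sh"
    "orth_proj (ip_SY T \<Omega>) (prod_span n \<nu>h sh (red_time_basis LS s \<psi> sh V)) (mat_to_fun \<nu> \<psi> X)
      = mat_to_fun \<nu> \<psi> (transpose_mat W * C * time_coeffs V sh)"
    "frob_norm (coords X - coords (transpose_mat W * C * time_coeffs V sh))
      \<le> sqrt (\<Sum>j\<in>{sh - 1..<s}. (sing_val D j)\<^sup>2)"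
proof -
  have s0: "0 < s" using sh by simp
  have Wt: "transpose_mat W \<in> carrier_mat q n" using W by simp
  have Xc: "X \<in> carrier_mat q s" unfolding X using Wt Y by simp
  have Zc: "zero_first_col X \<in> carrier_mat q s" using Xc unfolding zero_first_col_def by auto
  have V: "V \<in> carrier_mat s s" using is_svdD(3)[OF svd coords_carrier[OF Zc]] .
  define P where "P = transpose_mat LY * transpose_mat W"
  define K where "K = Y * LS"
  define u where "u = (\<lambda>j. transpose_mat LS $$ (j,0))"
  define \<kappa> where "\<kappa> = mat n s (\<lambda>(i,j). Y $$ (i,0) * u j)"
  have P: "P \<in> carrier_mat q n" unfolding P_def using LY(1) Wt by simp
  have K: "K \<in> carrier_mat n s" unfolding K_def using Y LS(1) by simp
  have cX: "coords X = P * K"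
    unfolding coords_def X P_def K_def using LY(1) Wt Y LS(1)
    by (intro assoc_mult_mat4[of _ q q _ n _ s _ s]) auto
  have \<kappa>: "\<kappa> = mat n s (\<lambda>(i,j). Y $$ (i,0) * LS $$ (0,j))"
    unfolding \<kappa>_def u_def using LS(1) s0 by (intro cong_mat) auto
  have "transpose_mat LY * X = P * Y"
    unfolding X P_def using LY(1) Wt Y by (simp add: assoc_mult_mat[of _ q q _ n _ s])
  from coords_zero_first_col[OF Xc P Y this s0]
  have cZ: "coords (zero_first_col X) = P * (K - \<kappa>)" unfolding K_def \<kappa> .
  obtain Cw where Cw: "Cw \<in> carrier_mat n sh"
    and res: "frob_norm (P * K - P * Cw * transpose_mat (prepend_col u V sh))
      = sqrt (\<Sum>j\<in>{sh - 1..<s}. (sing_val D j)\<^sup>2)"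
    by (rule prepend_col_svd_residual[OF P K sh svd[unfolded cZ \<kappa>_def]])
  have \<psi>h: "red_time_basis LS s \<psi> sh V l = (\<lambda>t. \<Sum>j<s. time_coeffs V sh $$ (l,j) * \<psi> j t)" for l
    by (simp add: red_time_basis_eq[OF V])
  obtain C0 where C0: "C0 \<in> carrier_mat n sh"
    and proj: "orth_proj (ip_SY T \<Omega>) (prod_span n \<nu>h sh (red_time_basis LS s \<psi> sh V)) (mat_to_fun \<nu> \<psi> X)
      = mat_to_fun \<nu> \<psi> (transpose_mat W * C0 * time_coeffs V sh)"
    and best: "\<And>C. C \<in> carrier_mat n sh \<Longrightarrow>
      frob_norm (coords X - coords (transpose_mat W * C0 * time_coeffs V sh))
      \<le> frob_norm (coords X - transpose_mat LY * transpose_mat W * C * (time_coeffs V sh * LS))"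
    using orth_proj_prod_span[OF W time_coeffs_carrier[OF V] Xc \<nu>h \<psi>h] by blast
  have "time_coeffs V sh * LS = transpose_mat (prepend_col u V sh)"
    unfolding u_def by (rule time_coeffs_LS[OF V])
  then show thesis
    using that[OF C0 proj] best[OF Cw] res unfolding cX P_def[symmetric] by simp
qed

lemma two_step_error:
  assumes "X \<in> carrier_mat q s" "X1 \<in> carrier_mat q s" "M \<in> carrier_mat q s"
    and "frob_norm (coords X - coords X1) \<le> e1" "frob_norm (coords X1 - coords M) \<le> e2"
  shows "norm_SY T \<Omega> (mat_to_fun \<nu> \<psi> X - mat_to_fun \<nu> \<psi> M) \<le> e1 + e2"
  using frob_norm_triangle[OF coords_carrier[OF assms(1)] coords_carrier[OF assms(2)] coords_carrier[OF assms(3)]]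
    assms(4,5) norm_SY_coords[OF assms(1,3)] by simp

lemma space_time_error:
  assumes X: "X \<in> carrier_mat q s" and qh: "qh \<le> q" and sh: "1 \<le> sh" "sh \<le> s"
    and svd1: "is_svd (transpose_mat LY * X * LS) U1 D1 V1"
    and x1: "x1 = orth_proj (ip_SY T \<Omega>) (prod_span qh (red_space_basis LY q \<nu> qh U1) s \<psi>) (mat_to_fun \<nu> \<psi> X)"
    and svd2: "is_svd (transpose_mat LY * zero_first_col (coeff_mat q s \<nu> \<psi> x1) * LS) U2 D2 V2"
  shows "norm_SY T \<Omega> (mat_to_fun \<nu> \<psi> X - orth_proj (ip_SY T \<Omega>)
      (prod_span qh (red_space_basis LY q \<nu> qh U1) sh (red_time_basis LS s \<psi> sh V2)) x1)
    \<le> sqrt (\<Sum>i\<in>{qh..<q}. (sing_val D1 i)\<^sup>2) + sqrt (\<Sum>j\<in>{sh - 1..<s}. (sing_val D2 j)\<^sup>2)"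
proof -
  note svd1 = svd1[folded coords_def]
  have U1: "U1 \<in> carrier_mat q q" using is_svdD(1)[OF svd1 coords_carrier[OF X]] .
  define W where "W = space_coeffs U1 qh"
  have W: "W \<in> carrier_mat qh q" unfolding W_def using space_coeffs_carrier[OF U1] .
  obtain C1 where C1: "C1 \<in> carrier_mat qh s"
    and proj1: "orth_proj (ip_SY T \<Omega>) (prod_span qh (red_space_basis LY q \<nu> qh U1) s \<psi>) (mat_to_fun \<nu> \<psi> X)
      = mat_to_fun \<nu> \<psi> (transpose_mat W * C1 * 1\<^sub>m s)"
    and err1: "frob_norm (coords X - coords (transpose_mat W * C1 * 1\<^sub>m s))
      \<le> sqrt (\<Sum>i\<in>{qh..<q}. (sing_val D1 i)\<^sup>2)"
    using space_step[OF svd1 X one_carrier_mat right_mult_one_mat[OF X, symmetric] qh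
        lin_comb_one_mat[symmetric]] unfolding W_def by blast
  define X1 where "X1 = transpose_mat W * C1"
  have X1: "X1 \<in> carrier_mat q s" unfolding X1_def using W C1 by simp
  have X1_eq: "transpose_mat W * C1 * 1\<^sub>m s = X1" using right_mult_one_mat[OF X1] X1_def by simp
  have x1_eq: "x1 = mat_to_fun \<nu> \<psi> X1" using x1 proj1 X1_eq by simp
  note svd2 = svd2[folded coords_def, unfolded x1_eq coeff_mat_mat_to_fun[OF X1]]
  have \<nu>h: "red_space_basis LY q \<nu> qh U1 k = (\<lambda>\<xi>. \<Sum>i<q. W $$ (k,i) * \<nu> i \<xi>)" for k
    unfolding W_def by (simp add: red_space_basis_eq[OF U1])
  obtain C2 where C2: "C2 \<in> carrier_mat qh sh"
    and proj2: "orth_proj (ip_SY T \<Omega>) (prod_span qh (red_space_basis LY q \<nu> qh U1) sh (red_time_basis LS s \<psi> sh V2))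
      (mat_to_fun \<nu> \<psi> X1) = mat_to_fun \<nu> \<psi> (transpose_mat W * C2 * time_coeffs V2 sh)"
    and err2: "frob_norm (coords X1 - coords (transpose_mat W * C2 * time_coeffs V2 sh))
      \<le> sqrt (\<Sum>j\<in>{sh - 1..<s}. (sing_val D2 j)\<^sup>2)"
    by (rule time_step[OF svd2 W C1 X1_def sh \<nu>h])
  have V2: "V2 \<in> carrier_mat s s"
    using is_svdD(3)[OF svd2 coords_carrier] X1 unfolding zero_first_col_def by auto
  have "transpose_mat W * C2 * time_coeffs V2 sh \<in> carrier_mat q s"
    using W C2 time_coeffs_carrier[OF V2] by (meson mult_carrier_mat transpose_carrier_mat)
  then show ?thesis
    unfolding x1_eq proj2 using two_step_error[OF X X1 _ err1[unfolded X1_eq] err2] by simp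
qed

lemma time_space_error:
  assumes X: "X \<in> carrier_mat q s" and qh: "qh \<le> q" and sh: "1 \<le> sh" "sh \<le> s"
    and svd3: "is_svd (transpose_mat LY * zero_first_col X * LS) U3 D3 V3"
    and x2: "x2 = orth_proj (ip_SY T \<Omega>) (prod_span q \<nu> sh (red_time_basis LS s \<psi> sh V3)) (mat_to_fun \<nu> \<psi> X)"
    and svd4: "is_svd (transpose_mat LY * coeff_mat q s \<nu> \<psi> x2 * LS) U4 D4 V4"
  shows "norm_SY T \<Omega> (mat_to_fun \<nu> \<psi> X - orth_proj (ip_SY T \<Omega>)
      (prod_span qh (red_space_basis LY q \<nu> qh U4) sh (red_time_basis LS s \<psi> sh V3)) x2)
    \<le> sqrt (\<Sum>j\<in>{sh - 1..<s}. (sing_val D3 j)\<^sup>2) + sqrt (\<Sum>i\<in>{qh..<q}. (sing_val D4 i)\<^sup>2)"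
proof -
  note svd3 = svd3[folded coords_def]
  have V3: "V3 \<in> carrier_mat s s"
    using is_svdD(3)[OF svd3 coords_carrier] X unfolding zero_first_col_def by auto
  define W where "W = time_coeffs V3 sh"
  have W: "W \<in> carrier_mat sh s" unfolding W_def using time_coeffs_carrier[OF V3] .
  obtain C3 where C3: "C3 \<in> carrier_mat q sh"
    and proj1: "orth_proj (ip_SY T \<Omega>) (prod_span q \<nu> sh (red_time_basis LS s \<psi> sh V3)) (mat_to_fun \<nu> \<psi> X)
      = mat_to_fun \<nu> \<psi> (transpose_mat (1\<^sub>m q) * C3 * W)"
    and err1: "frob_norm (coords X - coords (transpose_mat (1\<^sub>m q) * C3 * W))
      \<le> sqrt (\<Sum>j\<in>{sh - 1..<s}. (sing_val D3 j)\<^sup>2)"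
    using time_step[OF svd3 one_carrier_mat X _ sh lin_comb_one_mat[symmetric]] X
    unfolding W_def by auto
  define X2 where "X2 = C3 * W"
  have X2: "X2 \<in> carrier_mat q s" unfolding X2_def using C3 W by simp
  have X2_eq: "transpose_mat (1\<^sub>m q) * C3 * W = X2" unfolding X2_def using C3 by simp
  have x2_eq: "x2 = mat_to_fun \<nu> \<psi> X2" using x2 proj1 X2_eq by simp
  note svd4 = svd4[folded coords_def, unfolded x2_eq coeff_mat_mat_to_fun[OF X2]]
  have \<psi>h: "red_time_basis LS s \<psi> sh V3 l = (\<lambda>t. \<Sum>j<s. W $$ (l,j) * \<psi> j t)" for l
    unfolding W_def by (simp add: red_time_basis_eq[OF V3])
  obtain C4 where C4: "C4 \<in> carrier_mat qh sh"
    and proj2: "orth_proj (ip_SY T \<Omega>) (prod_span qh (red_space_basis LY q \<nu> qh U4) sh (red_time_basis LS s \<psi> sh V3))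
      (mat_to_fun \<nu> \<psi> X2) = mat_to_fun \<nu> \<psi> (transpose_mat (space_coeffs U4 qh) * C4 * W)"
    and err2: "frob_norm (coords X2 - coords (transpose_mat (space_coeffs U4 qh) * C4 * W))
      \<le> sqrt (\<Sum>i\<in>{qh..<q}. (sing_val D4 i)\<^sup>2)"
    by (rule space_step[OF svd4 C3 W X2_def qh \<psi>h])
  have U4: "U4 \<in> carrier_mat q q" using is_svdD(1)[OF svd4 coords_carrier[OF X2]] .
  have "transpose_mat (space_coeffs U4 qh) * C4 * W \<in> carrier_mat q s"
    using space_coeffs_carrier[OF U4] C4 W by (meson mult_carrier_mat transpose_carrier_mat)
  then show ?thesis
    unfolding x2_eq proj2 using two_step_error[OF X X2 _ err1[unfolded X2_eq] err2] by simp
qed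

end

theorem proposition2:
  fixes T :: real and \<Omega> :: "'d::euclidean_space set"
    and \<psi> :: "nat \<Rightarrow> real \<Rightarrow> real" and \<nu> :: "nat \<Rightarrow> 'd \<Rightarrow> real"
    and q s qh sh :: nat and LS LY X :: "real mat"
    and x0 :: "'d \<Rightarrow> real" and x :: "real \<Rightarrow> 'd \<Rightarrow> real"
  assumes T_pos: "T > 0"
    and domain: "open \<Omega>" "connected \<Omega>" "bounded \<Omega>" "\<Omega> \<noteq> {}"
    and psi_L2: "\<forall>j<s. \<psi> j \<in> borel_measurable lborel \<and> set_integrable lborel {0..T} (\<lambda>t. (\<psi> j t)\<^sup>2)"
    and nu_L2: "\<forall>i<q. \<nu> i \<in> borel_measurable lborel \<and> set_integrable lborel \<Omega> (\<lambda>\<xi>. (\<nu> i \<xi>)\<^sup>2)"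
    and nodal: "\<psi> 0 0 = 1" "\<forall>j. 1 \<le> j \<and> j < s \<longrightarrow> \<psi> j 0 = 0"
    and LS: "LS \<in> carrier_mat s s" "upper_triangular LS" "invertible_mat LS"
            "gram_T T s \<psi> = LS * transpose_mat LS"
    and LY: "LY \<in> carrier_mat q q" "invertible_mat LY"
            "gram_Om \<Omega> q \<nu> = LY * transpose_mat LY"
    and x0_L2: "x0 \<in> borel_measurable lborel" "set_integrable lborel \<Omega> (\<lambda>\<xi>. (x0 \<xi>)\<^sup>2)"
    and dims: "1 \<le> qh" "qh \<le> q" "2 \<le> sh" "sh \<le> s"
    and X: "X \<in> carrier_mat q s" "x = mat_to_fun \<nu> \<psi> X"
    and init: "(\<lambda>\<xi>. x 0 \<xi>) = orth_proj (ip_Om \<Omega>) (fspan q \<nu>) x0"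
  shows
    \<comment> \<open>case P = P_{Yhat -> Shat}\<close>
    "(\<forall>U1 D1 V1. is_svd (transpose_mat LY * X * LS) U1 D1 V1 \<longrightarrow>
       (let \<nu>h = red_space_basis LY q \<nu> qh U1;
            x1 = orth_proj (ip_SY T \<Omega>) (prod_span qh \<nu>h s \<psi>) x;
            X1 = coeff_mat q s \<nu> \<psi> x1
        in \<forall>U2 D2 V2. is_svd (transpose_mat LY * zero_first_col X1 * LS) U2 D2 V2 \<longrightarrow>
          (let \<psi>h = red_time_basis LS s \<psi> sh V2;
               Px = orth_proj (ip_SY T \<Omega>) (prod_span qh \<nu>h sh \<psi>h) x1
           in norm_SY T \<Omega> (x - Px)
                \<le> sqrt (\<Sum>i\<in>{qh..<q}. (sing_val D1 i)\<^sup>2) + sqrt (\<Sum>j\<in>{sh-1..<s}. (sing_val D2 j)\<^sup>2))))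
     \<and>
     \<comment> \<open>case P = P_{Shat -> Yhat}\<close>
     (\<forall>U3 D3 V3. is_svd (transpose_mat LY * zero_first_col X * LS) U3 D3 V3 \<longrightarrow>
       (let \<psi>h = red_time_basis LS s \<psi> sh V3;
            x2 = orth_proj (ip_SY T \<Omega>) (prod_span q \<nu> sh \<psi>h) x;
            X2 = coeff_mat q s \<nu> \<psi> x2
        in \<forall>U4 D4 V4. is_svd (transpose_mat LY * X2 * LS) U4 D4 V4 \<longrightarrow>
          (let \<nu>h = red_space_basis LY q \<nu> qh U4;
               Px = orth_proj (ip_SY T \<Omega>) (prod_span qh \<nu>h sh \<psi>h) x2
           in norm_SY T \<Omega> (x - Px)
                \<le> sqrt (\<Sum>j\<in>{sh-1..<s}. (sing_val D3 j)\<^sup>2) + sqrt (\<Sum>i\<in>{qh..<q}. (sing_val D4 i)\<^sup>2))))"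
proof -
  interpret gram_factors T \<Omega> \<psi> \<nu> q s LS LY
    using psi_L2 nu_L2 borel_open[OF domain(1)] LS(1,3,4) LY by unfold_locales auto
  have sh: "1 \<le> sh" using dims(3) by simp
  show ?thesis
    unfolding Let_def X(2)
    using space_time_error[OF X(1) dims(2) sh dims(4) _ refl] time_space_error[OF X(1) dims(2) sh dims(4) _ refl]
    by blast
qed

end
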